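(* Let $(R,\Lambda,S)$ be a generalised Renner–Coxeter system with unit group $W=G(R)$, and put $\Lambda_\circ=\Lambda\setminus\{1\}$. For every $w\in W$ fix an arbitrary reduced word $\underline w$ over $S$. Then $R$ admits the monoid presentation with generating set $S\cup\Lambda_\circ$ and defining relations (COX1) $s^2=1$ for $s\in S$; (COX2) $sts\cdots=tst\cdots$ (both sides of length $m_{st}$) for distinct $s,t\in S$ such that $st$ has finite order $m_{st}$; (REN1) $se=es$ for $e\in\Lambda_\circ$, $s\in\lambda^\star(e)$; (REN2) $se=es=e$ for $e\in\Lambda_\circ$, $s\in\lambda_\star(e)$; (REN3) $e\,\underline w\,f=e\wedge_wf$ for $e,f\in\Lambda_\circ$, $w\in\mathrm{Red}(e,f)$.
   Context: For a monoid $R$, $E(R)$ is its set of idempotents, $G(R)$ its unit group. $R$ is factorisable if $R=E(R)G(R)=G(R)E(R)$ and idempotents commute; then $E(R)$ is a semilattice ($e\le f\iff ef=fe=e$) on which $G(R)$ acts by conjugation. For $e\in E(R)$, $W(e)=\{w\in G(R)\mid we=ew\}$, $W_\star(e)=\{w\mid we=ew=e\}$. For a Coxeter system $(W,S)$, $W_I$ is the subgroup generated by $I\subseteq S$. A generalised Renner–Coxeter system is a triple $(R,\Lambda,S)$ with: (ECS1) $R$ factorisable; (ECS2) $\Lambda\subseteq E(R)$ contains exactly one element of each $G(R)$-orbit and is closed under multiplication; (ECS3) $(G(R),S)$ is a Coxeter system; (ECS4) for $e_1\le e_2$ in $E(R)$ there are $w\in G(R)$, $f_1\le f_2$ in $\Lambda$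 with $wf_iw^{-1}=e_i$; (ECS5) for $e\in\Lambda$, $W(e)$, $W_\star(e)$ are of the form $W_I$; (ECS6) with $\lambda^\star(e)=\{s\in S\mid se=es\ne e\}$, $e\le f$ in $\Lambda$ implies $\lambda^\star(e)\subseteq\lambda^\star(f)$. Let $\lambda(e),\lambda_\star(e)\subseteq S$ with $W(e)=W_{\lambda(e)}$, $W_\star(e)=W_{\lambda_\star(e)}$. $\mathrm{Red}(e,f)$ is the set of $w\in W$ of minimal Coxeter length in $W_{\lambda(e)}wW_{\lambda(f)}$; for $e,f\in\Lambda_\circ$ and $w\in\mathrm{Red}(e,f)$ the product $ewf$ in $R$ lies in $\Lambda$ and is denoted $e\wedge_wf$. *)

theory Defs
  imports Main
begin

text \<open>The monoid R is the whole type 'a (class monoid_mult).\<close>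

definition units :: "'a::monoid_mult set" where
  "units = {x. \<exists>y. x * y = 1 \<and> y * x = 1}"

definition ginv :: "'a::monoid_mult \<Rightarrow> 'a" where
  "ginv x = (THE y. x * y = 1 \<and> y * x = 1)"

definition idems :: "'a::monoid_mult set" where
  "idems = {e. e * e = e}"

definition idem_le :: "'a::monoid_mult \<Rightarrow> 'a \<Rightarrow> bool" where
  "idem_le e f \<longleftrightarrow> e * f = e \<and> f * e = e"

definition has_order :: "'a::monoid_mult \<Rightarrow> nat \<Rightarrow> bool" where
  "has_order x m \<longleftrightarrow> 0 < m \<and> x ^ m = 1 \<and> (\<forall>k. 0 < k \<and> k < m \<longrightarrow> x ^ k \<noteq> 1)"

definition onestep :: "('b list \<times> 'b list) set \<Rightarrow> ('b list \<times> 'b list) set" where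
  "onestep Rel = {(p @ l @ q, p @ r @ q) | p l r q. (l, r) \<in> Rel}"

definition wcong :: "('b list \<times> 'b list) set \<Rightarrow> ('b list \<times> 'b list) set" where
  "wcong Rel = (onestep Rel \<union> (onestep Rel)\<inverse>)\<^sup>*"

text \<open>The monoid (the whole type) is presented by generators X and relations Rel, i.e. the
  canonical evaluation map from the presented monoid is an isomorphism.\<close>

definition presents :: "'a::monoid_mult set \<Rightarrow> ('a list \<times> 'a list) set \<Rightarrow> bool" where
  "presents X Rel \<longleftrightarrow>
     (\<forall>x::'a. \<exists>u \<in> lists X. prod_list u = x) \<and>
     (\<forall>u \<in> lists X. \<forall>v \<in> lists X. prod_list u = prod_list v \<longleftrightarrow> (u, v) \<in> wcong Rel)"

text \<open>Coxeter systems (W,S) with W the unit group: S generates W and W has the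
  presentation <S | (st)^m(s,t) = 1>, written as a monoid presentation (S consists of involutions).\<close>

definition coxeter_rels :: "'a::monoid_mult set \<Rightarrow> ('a list \<times> 'a list) set" where
  "coxeter_rels S = {([s, s], []) | s. s \<in> S} \<union>
     {(concat (replicate m [s, t]), []) | s t m. s \<in> S \<and> t \<in> S \<and> s \<noteq> t \<and> has_order (s * t) m}"

definition coxeter_system :: "'a::monoid_mult set \<Rightarrow> bool" where
  "coxeter_system S \<longleftrightarrow> S \<subseteq> units \<and>
     (\<forall>x \<in> units. \<exists>u \<in> lists S. prod_list u = x) \<and>
     (\<forall>u \<in> lists S. \<forall>v \<in> lists S. prod_list u = prod_list v \<longleftrightarrow> (u, v) \<in> wcong (coxeter_rels S))"

inductive_set subgen :: "'a::monoid_mult set \<Rightarrow> 'a set" for I where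
  one: "1 \<in> subgen I"
| gen: "x \<in> I \<Longrightarrow> x \<in> subgen I"
| mult: "x \<in> subgen I \<Longrightarrow> y \<in> subgen I \<Longrightarrow> x * y \<in> subgen I"
| inv: "x \<in> subgen I \<Longrightarrow> ginv x \<in> subgen I"

definition Wc :: "'a::monoid_mult \<Rightarrow> 'a set" where
  "Wc e = {w \<in> units. w * e = e * w}"

definition Ws :: "'a::monoid_mult \<Rightarrow> 'a set" where
  "Ws e = {w \<in> units. w * e = e \<and> e * w = e}"

definition lam :: "'a::monoid_mult set \<Rightarrow> 'a \<Rightarrow> 'a set" where
  "lam S e = (SOME I. I \<subseteq> S \<and> Wc e = subgen I)"

definition lam_low :: "'a::monoid_mult set \<Rightarrow> 'a \<Rightarrow> 'a set" where
  "lam_low S e = (SOME I. I \<subseteq> S \<and> Ws e = subgen I)"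

definition lam_up :: "'a::monoid_mult set \<Rightarrow> 'a \<Rightarrow> 'a set" where
  "lam_up S e = {s \<in> S. s * e = e * s \<and> s * e \<noteq> e}"

definition clen :: "'a::monoid_mult set \<Rightarrow> 'a \<Rightarrow> nat" where
  "clen S w = (LEAST n. \<exists>u \<in> lists S. length u = n \<and> prod_list u = w)"

definition Red :: "'a::monoid_mult set \<Rightarrow> 'a \<Rightarrow> 'a \<Rightarrow> 'a set" where
  "Red S e f = {w \<in> units. \<forall>x \<in> subgen (lam S e). \<forall>y \<in> subgen (lam S f).
                   clen S w \<le> clen S (x * w * y)}"

definition factorisable :: "'a::monoid_mult itself \<Rightarrow> bool" where
  "factorisable _ \<longleftrightarrow>
     (UNIV :: 'a set) = {e * g | e g. e \<in> idems \<and> g \<in> units} \<and>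
     (UNIV :: 'a set) = {g * e | e g. e \<in> idems \<and> g \<in> units} \<and>
     (\<forall>e \<in> (idems :: 'a set). \<forall>f \<in> idems. e * f = f * e)"

definition gen_renner_coxeter :: "'a::monoid_mult set \<Rightarrow> 'a set \<Rightarrow> bool" where
  "gen_renner_coxeter \<Lambda> S \<longleftrightarrow>
     factorisable TYPE('a) \<and>
     (\<Lambda> \<subseteq> idems \<and> (\<forall>e \<in> idems. \<exists>!f. f \<in> \<Lambda> \<and> (\<exists>w \<in> units. w * f * ginv w = e))
        \<and> (\<forall>e \<in> \<Lambda>. \<forall>f \<in> \<Lambda>. e * f \<in> \<Lambda>)) \<and>
     coxeter_system S \<and>
     (\<forall>e1 \<in> idems. \<forall>e2 \<in> idems. idem_le e1 e2 \<longrightarrow>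
        (\<exists>w \<in> units. \<exists>f1 \<in> \<Lambda>. \<exists>f2 \<in> \<Lambda>. idem_le f1 f2 \<and>
            w * f1 * ginv w = e1 \<and> w * f2 * ginv w = e2)) \<and>
     (\<forall>e \<in> \<Lambda>. (\<exists>I \<subseteq> S. Wc e = subgen I) \<and> (\<exists>I \<subseteq> S. Ws e = subgen I)) \<and>
     (\<forall>e \<in> \<Lambda>. \<forall>f \<in> \<Lambda>. idem_le e f \<longrightarrow> lam_up S e \<subseteq> lam_up S f)"

fun alt_word :: "'b \<Rightarrow> 'b \<Rightarrow> nat \<Rightarrow> 'b list" where
  "alt_word s t 0 = []"
| "alt_word s t (Suc n) = s # alt_word t s n"

definition cox1_rels :: "'a::monoid_mult set \<Rightarrow> ('a list \<times> 'a list) set" where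
  "cox1_rels S = {([s, s], []) | s. s \<in> S}"

definition cox2_rels :: "'a::monoid_mult set \<Rightarrow> ('a list \<times> 'a list) set" where
  "cox2_rels S = {(alt_word s t m, alt_word t s m) | s t m.
      s \<in> S \<and> t \<in> S \<and> s \<noteq> t \<and> has_order (s * t) m}"

definition ren1_rels :: "'a::monoid_mult set \<Rightarrow> 'a set \<Rightarrow> ('a list \<times> 'a list) set" where
  "ren1_rels \<Lambda> S = {([s, e], [e, s]) | s e. e \<in> \<Lambda> - {1} \<and> s \<in> lam_up S e}"

definition ren2_rels :: "'a::monoid_mult set \<Rightarrow> 'a set \<Rightarrow> ('a list \<times> 'a list) set" where
  "ren2_rels \<Lambda> S = {([s, e], [e]) | s e. e \<in> \<Lambda> - {1} \<and> s \<in> lam_low S e}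
                  \<union> {([e, s], [e]) | s e. e \<in> \<Lambda> - {1} \<and> s \<in> lam_low S e}"

text \<open>REN3: e w f = e \<and>_w f, where the right-hand side is the generator e * w * f.\<close>

definition ren3_rels :: "'a::monoid_mult set \<Rightarrow> 'a set \<Rightarrow> ('a \<Rightarrow> 'a list) \<Rightarrow> ('a list \<times> 'a list) set" where
  "ren3_rels \<Lambda> S rw = {(e # rw w @ [f], [e * w * f]) | e f w.
      e \<in> \<Lambda> - {1} \<and> f \<in> \<Lambda> - {1} \<and> w \<in> Red S e f}"

end

theory Submission
  imports Defs "HOL-Library.Sublist"
begin

text \<open>
  Modulo the relations, every word over \<open>S \<union> \<Lambda>\<^sub>\<circ>\<close> is either a word over \<open>S\<close> or of the form
  \<open>a g c\<close> with \<open>a, c\<close> words over \<open>S\<close> and \<open>g \<in> \<Lambda>\<^sub>\<circ>\<close>. Indeed, a factor \<open>e a f\<close> with \<open>e, f \<in> \<Lambda>\<^sub>\<circ>\<close>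
  collapses: the value of \<open>a\<close> factors as \<open>x w y\<close> with \<open>x \<in> W(e)\<close>, \<open>y \<in> W(f)\<close>, \<open>w \<in> Red(e,f)\<close> and
  \<open>e w f \<in> \<Lambda>\<^sub>\<circ>\<close>; the letters of \<open>x\<close> and \<open>y\<close> lie in \<open>\<lambda>(e)\<close> and \<open>\<lambda>(f)\<close> and are moved across
  \<open>e\<close> and \<open>f\<close> by REN1 and REN2, after which REN3 applies. Two such normal forms \<open>a g c\<close>, \<open>a' g' c'\<close>
  with the same value have \<open>g = g'\<close>, because \<open>\<Lambda>\<close> meets each conjugacy class of idempotents
  once, and they differ by an element of \<open>W(g)\<close> on the left and one of \<open>W\<^sub>\<star>(g)\<close> on the right,
  which are absorbed by REN1 and REN2 in the same way. Words over \<open>S\<close> are handled by the Coxeter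
  presentation (COX1, COX2).

  The factorisation \<open>x w y\<close> comes from ECS4 and ECS6, together with two facts about Coxeter groups
  proved from the parity of reflection sequences: the deletion condition, and that reduced
  words of elements of a standard parabolic subgroup \<open>W\<^sub>K\<close> only use letters from \<open>K\<close>.
\<close>

section \<open>Units and idempotents of a monoid\<close>

lemma ginv_unique:
  fixes x y :: "'a::monoid_mult"
  assumes "x * y = 1" "y * x = 1"
  shows "ginv x = y"
proof -
  have uniq: "z = y" if "x * z = 1 \<and> z * x = 1" for z
  proof -
    have "z = (y * x) * z" using assms by simp
    also have "\<dots> = y * (x * z)" by (simp add: mult.assoc)
    also have "\<dots> = y" using that by simp
    finally show "z = y" .
  qed
  show ?thesis unfolding ginv_def using assms by (intro the_equality) (auto intro: uniq)
qed

lemma unitsI: "(x::'a::monoid_mult) * y = 1 \<Longrightarrow> y * x = 1 \<Longrightarrow> x \<in> units"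
  unfolding units_def by auto

lemma units_ginv:
  fixes x :: "'a::monoid_mult"
  assumes "x \<in> units"
  shows "x * ginv x = 1" "ginv x * x = 1" "x * (ginv x * z) = z" "ginv x * (x * z) = z"
proof -
  obtain y where "x * y = 1" "y * x = 1" using assms unfolding units_def by auto
  moreover from this have "ginv x = y" by (rule ginv_unique)
  ultimately show "x * ginv x = 1" "ginv x * x = 1" "x * (ginv x * z) = z" "ginv x * (x * z) = z"
    by (simp_all add: mult.assoc[symmetric])
qed

lemma ginv_in_units: "(x::'a::monoid_mult) \<in> units \<Longrightarrow> ginv x \<in> units"
  using units_ginv unitsI by metis

lemma one_in_units [simp]: "(1::'a::monoid_mult) \<in> units"
  by (rule unitsI[of 1 1]) simp_all

lemma units_mult:
  fixes x y :: "'a::monoid_mult"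
  assumes "x \<in> units" "y \<in> units"
  shows "x * y \<in> units"
proof (rule unitsI[of _ "ginv y * ginv x"])
  show "x * y * (ginv y * ginv x) = 1" "ginv y * ginv x * (x * y) = 1"
    using units_ginv[OF assms(1)] units_ginv[OF assms(2)] by (simp_all add: mult.assoc)
qed

lemma units_cancel_left: "(x::'a::monoid_mult) \<in> units \<Longrightarrow> x * a = x * b \<Longrightarrow> a = b"
  by (metis units_ginv(4))

lemma units_cancel_right: "(x::'a::monoid_mult) \<in> units \<Longrightarrow> a * x = b * x \<Longrightarrow> a = b"
  by (metis mult.assoc mult_1_right units_ginv(1))

lemma idem_eq_one_if_right_inverse: "(e::'a::monoid_mult) * e = e \<Longrightarrow> e * z = 1 \<Longrightarrow> e = 1"
  by (metis mult.assoc mult_1_right)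

lemma conj_eq_iff:
  fixes u :: "'a::monoid_mult"
  assumes "u \<in> units"
  shows "u * a * ginv u = b \<longleftrightarrow> u * a = b * u"
  by (metis assms units_cancel_right mult.assoc mult_1_right units_ginv(2))

lemma ginv_one [simp]: "ginv (1::'a::monoid_mult) = 1"
  by (rule ginv_unique) simp_all

lemma conj_ginv:
  fixes u :: "'a::monoid_mult"
  assumes "u \<in> units" "u * h * ginv u = g"
  shows "ginv u * g = h * ginv u"
  using units_ginv(4)[OF assms(1)] assms(2) by (auto simp: mult.assoc)

lemma conj_in_idems:
  fixes w :: "'a::monoid_mult"
  assumes "w \<in> units" "e \<in> idems"
  shows "w * e * ginv w \<in> idems"
proof -
  have "w * e * ginv w * (w * e * ginv w) = w * (e * e) * ginv w"
    by (simp add: mult.assoc units_ginv(4)[OF assms(1)])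
  then show ?thesis using assms(2) unfolding idems_def by simp
qed

lemma idem_le_mult:
  assumes "e \<in> idems" "f \<in> idems" "e * f = f * (e::'a::monoid_mult)"
  shows "e * f \<in> idems" "idem_le (e * f) e" "idem_le (e * f) f"
proof -
  have e: "e * e = e" and f: "f * f = f" using assms(1,2) unfolding idems_def by auto
  have "e * f * (e * f) = e * (f * e) * f" by (simp only: mult.assoc)
  also have "\<dots> = (e * e) * (f * f)" by (simp only: assms(3)[symmetric] mult.assoc)
  finally show "e * f \<in> idems" using e f unfolding idems_def by simp
  have "e * f * e = e * e * f" by (simp only: assms(3)[symmetric] mult.assoc)
  moreover have "f * (e * f) = e * (f * f)" by (metis assms(3) mult.assoc)
  moreover have "e * (e * f) = e * f" "e * f * f = e * f"
    using e f by (simp_all add: mult.assoc[symmetric], simp add: mult.assoc)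
  ultimately show "idem_le (e * f) e" "idem_le (e * f) f"
    using e f unfolding idem_le_def by simp_all
qed

lemma idems_eq_if_unit_multiples:
  fixes E1 E2 :: "'a::monoid_mult"
  assumes "E1 \<in> idems" "E2 \<in> idems" "E1 * E2 = E2 * E1"
    and "U1 \<in> units" "U2 \<in> units" "E1 * U1 = E2 * U2"
  shows "E1 = E2"
proof -
  have e: "E1 * E1 = E1" "E2 * E2 = E2" using assms(1,2) unfolding idems_def by auto
  have "E1 = E1 * U1 * ginv U1" using units_ginv(1)[OF assms(4)] by (simp add: mult.assoc)
  also have "\<dots> = E2 * (U2 * ginv U1)" using assms(6) by (simp add: mult.assoc[symmetric])
  finally have E1: "E1 = E2 * (U2 * ginv U1)" .
  have "E2 = E2 * U2 * ginv U2" using units_ginv(1)[OF assms(5)] by (simp add: mult.assoc)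
  also have "\<dots> = E1 * (U1 * ginv U2)" using assms(6) by (simp add: mult.assoc[symmetric])
  finally have E2: "E2 = E1 * (U1 * ginv U2)" .
  have "E2 * E1 = E1" using e(2) by (subst (1 2) E1) (simp add: mult.assoc[symmetric])
  moreover have "E1 * E2 = E2" using e(1) by (subst (1 2) E2) (simp add: mult.assoc[symmetric])
  ultimately show ?thesis using assms(3) by simp
qed

section \<open>Congruences on words\<close>

lemma onestep_context: "(u, v) \<in> onestep R \<Longrightarrow> (p @ u @ q, p @ v @ q) \<in> onestep R"
  unfolding onestep_def by clarsimp (metis append.assoc)

lemma wcong_refl [simp]: "(u, u) \<in> wcong R"
  unfolding wcong_def by simp

lemma wcong_trans: "(u, v) \<in> wcong R \<Longrightarrow> (v, w) \<in> wcong R \<Longrightarrow> (u, w) \<in> wcong R"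
  unfolding wcong_def by simp

lemma wcong_sym: "(u, v) \<in> wcong R \<Longrightarrow> (v, u) \<in> wcong R"
proof -
  have "(onestep R \<union> (onestep R)\<inverse>)\<inverse> = onestep R \<union> (onestep R)\<inverse>" by auto
  then show "(u, v) \<in> wcong R \<Longrightarrow> (v, u) \<in> wcong R"
    unfolding wcong_def by (metis rtrancl_converseI)
qed

lemma wcong_context: "(u, v) \<in> wcong R \<Longrightarrow> (p @ u @ q, p @ v @ q) \<in> wcong R"
  unfolding wcong_def
proof (induction rule: rtrancl_induct)
  case (step y z)
  then have "(p @ y @ q, p @ z @ q) \<in> onestep R \<union> (onestep R)\<inverse>"
    using onestep_context by blast
  with step.IH show ?case by (rule rtrancl_into_rtrancl)
qed simp

lemma wcong_append:
  "(u, v) \<in> wcong R \<Longrightarrow> (u', v') \<in> wcong R \<Longrightarrow> (u @ u', v @ v') \<in> wcong R"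
  using wcong_context[of u v R "[]" u'] wcong_context[of u' v' R v "[]"] wcong_trans by fastforce

lemma wcong_rel: "(l, r) \<in> R \<Longrightarrow> (l, r) \<in> wcong R"
proof -
  assume "(l, r) \<in> R"
  then have "([] @ l @ [], [] @ r @ []) \<in> onestep R" unfolding onestep_def by blast
  then show ?thesis unfolding wcong_def by auto
qed

lemma wcong_mono:
  assumes "R \<subseteq> wcong R'"
  shows "wcong R \<subseteq> wcong R'"
proof -
  have "onestep R \<subseteq> wcong R'"
    using assms wcong_context unfolding onestep_def by blast
  then have "onestep R \<union> (onestep R)\<inverse> \<subseteq> wcong R'" using wcong_sym by blast
  then have "(onestep R \<union> (onestep R)\<inverse>)\<^sup>* \<subseteq> (wcong R')\<^sup>*" by (rule rtrancl_mono)
  then show ?thesis unfolding wcong_def by simp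
qed

lemma wcong_prod_list_eq:
  assumes "\<forall>(l, r) \<in> R. prod_list l = prod_list (r::'a::monoid_mult list)"
    and "(u, v) \<in> wcong R"
  shows "prod_list u = prod_list v"
proof -
  have "prod_list a = prod_list b" if "(a, b) \<in> onestep R" for a b
    using that assms(1) unfolding onestep_def by (auto simp: mult.assoc)
  with assms(2) show ?thesis unfolding wcong_def
    by (induction rule: rtrancl_induct) auto
qed

section \<open>Coxeter systems\<close>

fun refl_seq :: "'a::monoid_mult list \<Rightarrow> 'a list" where
  "refl_seq [] = []"
| "refl_seq (s # u) = s # map (\<lambda>t. s * t * s) (refl_seq u)"

lemma length_refl_seq [simp]: "length (refl_seq u) = length u"
  by (induction u) auto

lemma refl_seq_append:
  "refl_seq (p @ q) = refl_seq p @ map (\<lambda>t. prod_list p * t * prod_list (rev p)) (refl_seq q)"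
  by (induction p) (auto simp: mult.assoc)

lemma nth_refl_seq:
  "i < length u \<Longrightarrow> refl_seq u ! i = prod_list (take i u) * u ! i * prod_list (rev (take i u))"
proof (induction u arbitrary: i)
  case (Cons s u)
  then show ?case by (cases i) (auto simp: mult.assoc)
qed simp

lemma refl_seq_alternating:
  "refl_seq (concat (replicate k [s, t])) = map (\<lambda>i. (s * t) ^ i * s) [0..<2 * k]"
proof (induction k)
  case (Suc k)
  have upt: "[0..<2 * Suc k] = 0 # 1 # map (\<lambda>i. i + 2) [0..<2 * k]"
  proof -
    have "[0..<2 * Suc k] = [0..<2] @ [2..<2 * k + 2]"
      using upt_add_eq_append[of 0 2 "2 * k"] by (simp add: add.commute)
    also have "[2..<2 * k + 2] = map (\<lambda>i. i + 2) [0..<2 * k]" by (simp only: map_add_upt)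
    finally show ?thesis by (simp add: upt_rec)
  qed
  have step: "s * (t * ((s * t) ^ i * s) * t) * s = (s * t) ^ (i + 2) * s" for i
  proof -
    have "s * (t * ((s * t) ^ i * s) * t) * s = (s * t) * (s * t) ^ i * (s * t) * s"
      by (simp add: mult.assoc)
    also have "\<dots> = (s * t) ^ (i + 2) * s"
      by (metis add_2_eq_Suc' power_Suc power_Suc2 mult.assoc)
    finally show ?thesis .
  qed
  have "refl_seq (concat (replicate (Suc k) [s, t]))
      = s # (s * t * s) # map (\<lambda>x. s * (t * x * t) * s) (refl_seq (concat (replicate k [s, t])))"
    by (simp add: mult.assoc)
  also have "\<dots> = map (\<lambda>i. (s * t) ^ i * s) (0 # 1 # map (\<lambda>i. i + 2) [0..<2 * k])"
    using Suc step by simp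
  finally show ?case by (simp only: upt)
qed simp

lemma prod_list_alternating: "prod_list (concat (replicate k [s, t])) = ((s::'a::monoid_mult) * t) ^ k"
  by (induction k) (auto simp: mult.assoc power_commutes)

lemma rev_alternating: "rev (concat (replicate k [s, t])) = concat (replicate k [t, s])"
  by (simp add: rev_concat)

lemma count_list_distinct: "distinct xs \<Longrightarrow> count_list xs x = (if x \<in> set xs then 1 else 0)"
  by (induction xs) auto

text \<open>This set is invariant under the Coxeter relations, which yields the deletion condition.\<close>

definition odd_refls :: "'a::monoid_mult list \<Rightarrow> 'a set" where
  "odd_refls u = {t. odd (count_list (refl_seq u) t)}"

lemma odd_refls_subset: "odd_refls u \<subseteq> set (refl_seq u)"
proof
  fix t assume "t \<in> odd_refls u"
  then have "count_list (refl_seq u) t \<noteq> 0" unfolding odd_refls_def by (metis even_zero mem_Collect_eq)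
  then show "t \<in> set (refl_seq u)" by (simp add: count_list_0_iff)
qed

lemma odd_refls_remove_square:
  assumes "refl_seq l = R @ R" "prod_list l = 1" "prod_list (rev l) = 1"
  shows "odd_refls (p @ l @ q) = odd_refls (p @ q)"
proof -
  let ?c = "\<lambda>t. prod_list p * t * prod_list (rev p)"
  have "refl_seq (p @ l @ q) = refl_seq p @ map ?c (R @ R) @ map ?c (refl_seq q)"
    using assms by (simp add: refl_seq_append)
  moreover have "refl_seq (p @ q) = refl_seq p @ map ?c (refl_seq q)"
    by (simp add: refl_seq_append)
  ultimately show ?thesis unfolding odd_refls_def by auto
qed

lemma power_shift: "(a::'a::monoid_mult) * (b * a) ^ n = (a * b) ^ n * a"
  by (induction n) (auto simp: mult.assoc)

locale coxeter =
  fixes S :: "'a::monoid_mult set"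
  assumes coxeter_system: "coxeter_system S"
begin

lemma S_units: "S \<subseteq> units"
  using coxeter_system unfolding coxeter_system_def by auto

lemma units_words: "x \<in> units \<Longrightarrow> \<exists>u \<in> lists S. prod_list u = x"
  using coxeter_system unfolding coxeter_system_def by auto

lemma prod_list_eq_iff_wcong:
  "u \<in> lists S \<Longrightarrow> v \<in> lists S \<Longrightarrow> prod_list u = prod_list v \<longleftrightarrow> (u, v) \<in> wcong (coxeter_rels S)"
  using coxeter_system unfolding coxeter_system_def by auto

lemma S_involution: "s \<in> S \<Longrightarrow> s * s = 1"
  using prod_list_eq_iff_wcong[of "[s, s]" "[]"]
  by (simp add: wcong_rel coxeter_rels_def)

lemma prod_list_rev:
  assumes "u \<in> lists S"
  shows "prod_list u * prod_list (rev u) = 1" "prod_list (rev u) * prod_list u = 1"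
  using assms
proof (induction u)
  case (Cons s u)
  have "prod_list (s # u) * prod_list (rev (s # u)) = s * (prod_list u * prod_list (rev u)) * s"
    "prod_list (rev (s # u)) * prod_list (s # u) = prod_list (rev u) * (s * s) * prod_list u"
    by (simp_all add: mult.assoc)
  with Cons S_involution show "prod_list (s # u) * prod_list (rev (s # u)) = 1"
    "prod_list (rev (s # u)) * prod_list (s # u) = 1" by simp_all
qed simp_all

lemma prod_list_in_units: "u \<in> lists S \<Longrightarrow> prod_list u \<in> units"
  using prod_list_rev unitsI by blast

lemma ginv_prod_list: "u \<in> lists S \<Longrightarrow> ginv (prod_list u) = prod_list (rev u)"
  using prod_list_rev ginv_unique by blast

lemma clen_le: "u \<in> lists S \<Longrightarrow> clen S (prod_list u) \<le> length u"
  unfolding clen_def by (rule Least_le) auto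

lemma reduced_word_exists: "x \<in> units \<Longrightarrow> \<exists>u \<in> lists S. length u = clen S x \<and> prod_list u = x"
proof -
  assume "x \<in> units"
  then have "\<exists>n. \<exists>u \<in> lists S. length u = n \<and> prod_list u = x" using units_words by blast
  then show ?thesis unfolding clen_def by (rule LeastI_ex)
qed

lemma reduced_prefix:
  assumes "u @ v \<in> lists S" "length (u @ v) = clen S (prod_list (u @ v))"
  shows "length u = clen S (prod_list u)"
proof (rule ccontr)
  assume "length u \<noteq> clen S (prod_list u)"
  with assms(1) have "clen S (prod_list u) < length u" using clen_le[of u] by simp
  moreover obtain w where "w \<in> lists S" "length w = clen S (prod_list u)" "prod_list w = prod_list u"
    using reduced_word_exists[of "prod_list u"] assms(1) prod_list_in_units by auto
  ultimately show False
    using clen_le[of "w @ v"] assms by simp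
qed

lemma onestep_odd_refls:
  assumes "(u, v) \<in> onestep (coxeter_rels S)"
  shows "odd_refls u = odd_refls v"
proof -
  obtain p l q where uv: "u = p @ l @ q" "v = p @ q" "(l, []) \<in> coxeter_rels S"
    using assms unfolding onestep_def coxeter_rels_def by blast
  then consider s where "l = [s, s]" "s \<in> S"
    | s t m where "l = concat (replicate m [s, t])" "s \<in> S" "t \<in> S" "has_order (s * t) m"
    unfolding coxeter_rels_def by blast
  then show ?thesis
  proof cases
    case (1 s)
    then have "refl_seq l = [s] @ [s]" "prod_list l = 1" "prod_list (rev l) = 1"
      using S_involution by (simp_all add: mult.assoc)
    then show ?thesis using uv odd_refls_remove_square by metis
  next
    case (2 s t m)
    have st1: "(s * t) ^ m = 1" using 2 unfolding has_order_def by simp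
    have "(t * s) ^ m = (t * s) ^ m * (t * t)" using S_involution 2 by simp
    also have "\<dots> = t * (s * t) ^ m * t" by (simp add: power_shift mult.assoc)
    finally have ts1: "(t * s) ^ m = 1" using st1 S_involution 2 by simp
    let ?f = "\<lambda>i. (s * t) ^ i * s"
    have "map ?f [m..<m + m] = map (\<lambda>i. ?f (i + m)) [0..<m]"
      by (simp add: map_add_upt[symmetric])
    also have "\<dots> = map ?f [0..<m]" using st1 by (simp add: power_add)
    finally have "refl_seq l = map ?f [0..<m] @ map ?f [0..<m]"
      using 2 upt_add_eq_append[of 0 m m] by (simp add: refl_seq_alternating mult_2)
    moreover have "prod_list l = 1" "prod_list (rev l) = 1"
      using 2 st1 ts1 by (simp_all add: prod_list_alternating rev_alternating)
    ultimately show ?thesis using uv odd_refls_remove_square by metis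
  qed
qed

lemma odd_refls_eq:
  assumes "u \<in> lists S" "v \<in> lists S" "prod_list u = prod_list v"
  shows "odd_refls u = odd_refls v"
proof -
  have "(u, v) \<in> wcong (coxeter_rels S)" using assms prod_list_eq_iff_wcong by blast
  then show ?thesis unfolding wcong_def
    by (induction rule: rtrancl_induct) (auto dest: onestep_odd_refls)
qed

lemma S_not_one: "s \<in> S \<Longrightarrow> s \<noteq> 1"
proof
  assume "s \<in> S" "s = 1"
  then have "odd_refls [s] = odd_refls []" using odd_refls_eq[of "[s]" "[]"] by simp
  moreover have "s \<in> odd_refls [s]" "s \<notin> odd_refls []" by (simp_all add: odd_refls_def)
  ultimately show False by simp
qed

lemma nonreduced_refl_seq_not_distinct:
  assumes "u \<in> lists S" "clen S (prod_list u) < length u"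
  shows "\<not> distinct (refl_seq u)"
proof
  assume dist: "distinct (refl_seq u)"
  obtain v where v: "v \<in> lists S" "length v = clen S (prod_list u)" "prod_list v = prod_list u"
    using reduced_word_exists[OF prod_list_in_units[OF assms(1)]] by blast
  have "odd_refls u = set (refl_seq u)"
    unfolding odd_refls_def using dist by (auto simp: count_list_distinct)
  then have "length u = card (odd_refls v)"
    using odd_refls_eq[OF assms(1) v(1) v(3)[symmetric]] distinct_card[OF dist] by simp
  also have "\<dots> \<le> length (refl_seq v)"
    using card_mono[OF finite_set odd_refls_subset] card_length le_trans by blast
  finally show False using v assms by simp
qed

lemma equal_reflections:
  assumes "a \<in> lists S" "b \<in> lists S" "x \<in> S" "y \<in> S"
    and "prod_list a * x * prod_list (rev a) = prod_list (a @ [x] @ b) * y * prod_list (rev (a @ [x] @ b))"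
  shows "x * prod_list b * y = prod_list b"
proof -
  let ?A = "prod_list a" and ?Ar = "prod_list (rev a)" and ?B = "prod_list b" and ?Br = "prod_list (rev b)"
  have "?A * (x * ?Ar) = ?A * ((x * ?B * y * ?Br * x) * ?Ar)"
    using assms(5) by (simp add: mult.assoc)
  then have "x * ?Ar = (x * ?B * y * ?Br * x) * ?Ar"
    using units_cancel_left prod_list_in_units assms(1) by blast
  moreover have "rev a \<in> lists S" using assms(1) by auto
  ultimately have x: "x = x * ?B * y * ?Br * x"
    using units_cancel_right[OF prod_list_in_units] by blast
  have "1 = x * (x * ?B * y * ?Br * x)" using x S_involution assms(3) by simp
  also have "\<dots> = ?B * y * ?Br * x" using S_involution assms(3) by (simp add: mult.assoc[symmetric])
  finally have "x = ?B * y * ?Br * x * x" by (metis mult_1)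
  then have "x = ?B * y * ?Br" using S_involution assms(3) by (simp add: mult.assoc)
  then have "x * ?B = ?B * y * (?Br * ?B)" by (simp add: mult.assoc)
  then have "x * ?B * y = ?B * (y * y)" using prod_list_rev(2)[OF assms(2)] by (simp add: mult.assoc)
  then show ?thesis using S_involution assms(4) by simp
qed

lemma deletion:
  assumes "u \<in> lists S" "clen S (prod_list u) < length u"
  shows "\<exists>a x b y c. u = a @ [x] @ b @ [y] @ c \<and> prod_list (a @ b @ c) = prod_list u"
proof -
  obtain i j where ij: "i < j" "j < length u" "refl_seq u ! i = refl_seq u ! j"
    using nonreduced_refl_seq_not_distinct[OF assms] unfolding distinct_conv_nth
    by (metis length_refl_seq linorder_neqE_nat)
  define a where "a = take i u"
  define r where "r = drop (Suc i) u"
  define b where "b = take (j - Suc i) r"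
  define c where "c = drop (Suc j) u"
  have "u = a @ [u ! i] @ r"
    unfolding a_def r_def using ij by (simp add: id_take_nth_drop)
  moreover have "r = b @ [u ! j] @ c"
  proof -
    have k: "j - Suc i < length r" unfolding r_def using ij by simp
    have "r ! (j - Suc i) = u ! j" "drop (Suc (j - Suc i)) r = c"
      unfolding r_def c_def using ij by simp_all
    then show ?thesis unfolding b_def using id_take_nth_drop[OF k] by simp
  qed
  ultimately have u: "u = a @ [u ! i] @ b @ [u ! j] @ c" by simp
  have "length (a @ [u ! i] @ b) = j"
    unfolding a_def b_def r_def using ij by simp
  then have "take j u = a @ [u ! i] @ b"
    using u by (metis append.assoc append_eq_conv_conj)
  moreover have "take i u = a" by (simp add: a_def)
  ultimately have "prod_list a * u ! i * prod_list (rev a)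
      = prod_list (a @ [u ! i] @ b) * u ! j * prod_list (rev (a @ [u ! i] @ b))"
    using ij nth_refl_seq[of i u] nth_refl_seq[of j u] by simp
  moreover have "a \<in> lists S" "b \<in> lists S" "u ! i \<in> S" "u ! j \<in> S"
    using assms(1) by (subst (asm) u; simp)+
  ultimately have "u ! i * prod_list b * u ! j = prod_list b"
    using equal_reflections by blast
  then have "prod_list (a @ b @ c) = prod_list u"
    by (subst u) (simp add: mult.assoc[symmetric])
  with u show ?thesis by blast
qed

end

lemma subseq_set: "subseq xs ys \<Longrightarrow> set xs \<subseteq> set ys"
  by (induction rule: list_emb.induct) auto

lemma prod_list_in_subgen: "V \<in> lists I \<Longrightarrow> prod_list V \<in> subgen I"
  by (induction V) (auto intro: subgen.intros)

lemma subgen_mono: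
  assumes "I \<subseteq> J"
  shows "x \<in> subgen I \<Longrightarrow> x \<in> subgen J"
  by (induction rule: subgen.induct) (use assms in \<open>auto intro: subgen.intros\<close>)

context coxeter
begin

lemma reduced_subseq:
  assumes "u \<in> lists S"
  shows "\<exists>v. subseq v u \<and> prod_list v = prod_list u \<and> length v = clen S (prod_list v)"
  using assms
proof (induction "length u" arbitrary: u rule: less_induct)
  case less
  show ?case
  proof (cases "length u = clen S (prod_list u)")
    case False
    with less.prems have "clen S (prod_list u) < length u" using clen_le[of u] by simp
    then obtain a x b y c where u: "u = a @ [x] @ b @ [y] @ c" "prod_list (a @ b @ c) = prod_list u"
      using deletion less.prems by blast
    have sub: "subseq (a @ b @ c) u"
      unfolding u(1) by (simp add: subseq_append' list_emb.list_emb_Cons)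
    obtain v where "subseq v (a @ b @ c)" "prod_list v = prod_list u" "length v = clen S (prod_list v)"
      using less.hyps[of "a @ b @ c"] less.prems u by fastforce
    then show ?thesis using sub subseq_order.order_trans by blast
  qed blast
qed

lemma exchange_right:
  assumes V: "V \<in> lists S" "length V = clen S (prod_list V)"
    and s: "s \<in> S" "clen S (prod_list (V @ [s])) < length (V @ [s])"
  shows "\<exists>W. subseq W V \<and> prod_list W = prod_list (V @ [s])"
proof -
  obtain a x b y c where del: "V @ [s] = a @ [x] @ b @ [y] @ c" "prod_list (a @ b @ c) = prod_list (V @ [s])"
    using deletion V s by (metis Cons_in_lists_iff append_in_lists_conv lists.Nil)
  show ?thesis
  proof (cases c rule: rev_cases)
    case Nil
    then have "V = a @ [x] @ b" using del(1) by simp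
    then show ?thesis using del Nil by (intro exI[of _ "a @ b"]) (simp add: subseq_append' list_emb.list_emb_Cons)
  next
    case (snoc c' z)
    then have V': "V = a @ [x] @ b @ [y] @ c'" using del(1) by simp
    have "prod_list (a @ b @ c') * s = prod_list V * s"
      using del snoc by (simp add: mult.assoc)
    then have "prod_list (a @ b @ c') = prod_list V"
      using units_cancel_right S_units s(1) by blast
    moreover have "a @ b @ c' \<in> lists S" using V' V(1) by auto
    ultimately show ?thesis using clen_le[of "a @ b @ c'"] V' V(2) by simp
  qed
qed

lemma subgen_words:
  assumes "I \<subseteq> S"
  shows "x \<in> subgen I \<Longrightarrow> \<exists>V \<in> lists I. prod_list V = x"
proof (induction rule: subgen.induct)
  case one then show ?case by (intro bexI[of _ "[]"]) auto
next
  case (gen x) then show ?case by (intro bexI[of _ "[x]"]) auto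
next
  case (mult x y)
  then obtain V W where "V \<in> lists I" "prod_list V = x" "W \<in> lists I" "prod_list W = y" by blast
  then show ?case by (intro bexI[of _ "V @ W"]) auto
next
  case (inv x)
  then obtain V where V: "V \<in> lists I" "prod_list V = x" by blast
  then have "ginv x = prod_list (rev V)" using ginv_prod_list assms by blast
  then show ?case using V by (intro bexI[of _ "rev V"]) auto
qed

lemma parabolic_reduced_word:
  assumes "I \<subseteq> S" "x \<in> subgen I"
  shows "\<exists>V \<in> lists I. prod_list V = x \<and> length V = clen S x"
proof -
  obtain U where U: "U \<in> lists I" "prod_list U = x" using subgen_words assms by blast
  moreover from this have "U \<in> lists S" using assms(1) by auto
  ultimately obtain V where V: "subseq V U" "prod_list V = x" "length V = clen S x"
    using reduced_subseq by metis
  moreover have "V \<in> lists I" using U(1) subseq_set[OF V(1)] by auto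
  ultimately show ?thesis by blast
qed

lemma clen_gen: "s \<in> S \<Longrightarrow> clen S s = 1"
proof -
  assume s: "s \<in> S"
  then obtain u where "u \<in> lists S" "length u = clen S s" "prod_list u = s"
    using reduced_word_exists S_units by blast
  then show ?thesis using clen_le[of "[s]"] s S_not_one[OF s] by (cases u) auto
qed

lemma gen_in_parabolic: "K \<subseteq> S \<Longrightarrow> s \<in> S \<Longrightarrow> s \<in> subgen K \<Longrightarrow> s \<in> K"
  using parabolic_reduced_word[of K s] clen_gen[of s] by (auto simp: length_Suc_conv)

lemma reduced_word_in_parabolic:
  assumes "K \<subseteq> S"
  shows "u \<in> lists S \<Longrightarrow> length u = clen S (prod_list u) \<Longrightarrow> prod_list u \<in> subgen K \<Longrightarrow> set u \<subseteq> K"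
proof (induction u rule: rev_induct)
  case (snoc s u)
  let ?d = "prod_list (u @ [s])"
  have s: "s \<in> S" and u: "u \<in> lists S" using snoc.prems(1) by auto
  have u_red: "length u = clen S (prod_list u)" using reduced_prefix snoc.prems(1,2) by blast
  obtain V where V: "V \<in> lists K" "prod_list V = ?d" "length V = clen S ?d"
    using parabolic_reduced_word assms snoc.prems(3) by blast
  have Vs: "prod_list (V @ [s]) = prod_list u" using V(2) S_involution s by (simp add: mult.assoc)
  then have "clen S (prod_list (V @ [s])) < length (V @ [s])"
    using u_red V(3) snoc.prems(2) by simp
  moreover have "V \<in> lists S" using V(1) assms by auto
  ultimately obtain W where W: "subseq W V" "prod_list W = prod_list u"
    using exchange_right[of V s] V(2,3) s Vs by metis
  have "W \<in> lists K" using subseq_set[OF W(1)] V(1) by auto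
  then have uK: "prod_list u \<in> subgen K" using W(2) prod_list_in_subgen by metis
  have "s = ginv (prod_list u) * ?d"
    using units_ginv(4)[OF prod_list_in_units[OF u(1)]] by simp
  also have "\<dots> \<in> subgen K" using uK snoc.prems(3) by (simp add: subgen.mult subgen.inv)
  finally have "s \<in> K" using gen_in_parabolic assms s by blast
  then show ?case using snoc.IH uK u u_red by simp
qed simp

lemma parabolic_double_coset_reduce:
  assumes IJK: "I \<subseteq> S" "J \<subseteq> S" "K \<subseteq> S"
    and x: "x \<in> subgen I" and y: "y \<in> subgen J" and w: "w \<in> units"
    and xwy: "x * w * y \<in> subgen K"
  shows "\<exists>x' w' y'. x * w * y = x' * w' * y' \<and> x' \<in> subgen (I \<inter> K) \<and> y' \<in> subgen (J \<inter> K) \<and>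
     w' \<in> units \<and> clen S w' \<le> clen S w"
proof -
  obtain X where X: "X \<in> lists I" "prod_list X = x" using subgen_words[OF IJK(1) x] by blast
  obtain Y where Y: "Y \<in> lists J" "prod_list Y = y" using subgen_words[OF IJK(2) y] by blast
  obtain M where M: "M \<in> lists S" "length M = clen S w" "prod_list M = w"
    using reduced_word_exists[OF w] by blast
  have XMY: "X @ M @ Y \<in> lists S" using X Y M IJK by auto
  obtain v where v: "subseq v (X @ M @ Y)" "prod_list v = x * w * y" "length v = clen S (prod_list v)"
    using reduced_subseq[OF XMY] X Y M by (auto simp: mult.assoc)
  obtain X' v2 where "v = X' @ v2" "subseq X' X" "subseq v2 (M @ Y)"
    using v(1) subseq_appendE by blast
  moreover obtain M' Y' where "v2 = M' @ Y'" "subseq M' M" "subseq Y' Y"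
    using \<open>subseq v2 (M @ Y)\<close> subseq_appendE by blast
  ultimately have v': "v = X' @ M' @ Y'" "subseq X' X" "subseq M' M" "subseq Y' Y" by simp_all
  have "v \<in> lists S" using subseq_set[OF v(1)] XMY by auto
  then have "set v \<subseteq> K" using reduced_word_in_parabolic[OF IJK(3)] v(2,3) xwy by simp
  then have "X' \<in> lists (I \<inter> K)" "Y' \<in> lists (J \<inter> K)" "M' \<in> lists S"
    using v' X(1) Y(1) M(1) subseq_set[OF v'(2)] subseq_set[OF v'(3)] subseq_set[OF v'(4)] by auto
  moreover have "clen S (prod_list M') \<le> clen S w"
    using clen_le[of M'] list_emb_length[OF v'(3)] M \<open>M' \<in> lists S\<close> by simp
  ultimately show ?thesis
    using v v' by (intro exI[of _ "prod_list X'"] exI[of _ "prod_list M'"] exI[of _ "prod_list Y'"])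
      (auto simp: mult.assoc prod_list_in_subgen prod_list_in_units)
qed

end

section \<open>Generalised Renner--Coxeter systems\<close>

lemma Wc_mult: "x \<in> Wc e \<Longrightarrow> y \<in> Wc e \<Longrightarrow> x * y \<in> Wc e"
proof -
  assume "x \<in> Wc e" "y \<in> Wc e"
  then have u: "x \<in> units" "y \<in> units" and c: "x * e = e * x" "y * e = e * y"
    unfolding Wc_def by auto
  have "x * y * e = e * (x * y)" by (metis c mult.assoc)
  then show ?thesis using units_mult[OF u] unfolding Wc_def by simp
qed

lemma Wc_ginv: "x \<in> Wc e \<Longrightarrow> ginv x \<in> Wc e"
proof -
  assume "x \<in> Wc e"
  then have x: "x \<in> units" and c: "x * e = e * x" unfolding Wc_def by auto
  have "ginv x * e = ginv x * (e * x) * ginv x" using units_ginv(1)[OF x] by (simp add: mult.assoc)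
  also have "\<dots> = e * ginv x" using units_ginv(4)[OF x] by (simp add: c[symmetric] mult.assoc)
  finally show ?thesis using ginv_in_units[OF x] unfolding Wc_def by simp
qed

lemma Ws_mult: "x \<in> Ws e \<Longrightarrow> y \<in> Ws e \<Longrightarrow> x * y \<in> Ws e"
  unfolding Ws_def by (simp add: units_mult mult.assoc) (metis mult.assoc)

lemma Ws_ginv: "x \<in> Ws e \<Longrightarrow> ginv x \<in> Ws e"
proof -
  assume "x \<in> Ws e"
  then have x: "x \<in> units" and c: "x * e = e" "e * x = e" unfolding Ws_def by auto
  have "ginv x * e = e" using units_ginv(4)[OF x, of e] c(1) by simp
  moreover have "e * ginv x = e" using units_ginv(1)[OF x] c(2) by (metis mult.assoc mult_1_right)
  ultimately show ?thesis using ginv_in_units[OF x] unfolding Ws_def by simp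
qed

lemma one_in_Wc: "1 \<in> Wc e"
  unfolding Wc_def by simp

lemma lam_up_subset_Wc: "S \<subseteq> units \<Longrightarrow> lam_up S e \<subseteq> Wc e"
  unfolding lam_up_def Wc_def by auto

lemma Ws_conj:
  assumes "a \<in> Wc h" "s \<in> Ws h"
  shows "ginv a * s * a \<in> Ws h"
proof -
  have a: "a \<in> units" "a * h = h * a" and ia: "ginv a * h = h * ginv a"
    using assms(1) Wc_ginv[OF assms(1)] unfolding Wc_def by auto
  have s: "s \<in> units" "s * h = h" "h * s = h" using assms(2) unfolding Ws_def by auto
  have "ginv a * s * a * h = ginv a * (s * h) * a" using a by (simp add: mult.assoc)
  also have "\<dots> = h" using s ia units_ginv(2)[OF a(1)] by (metis mult.assoc mult_1_right)
  finally have 1: "ginv a * s * a * h = h" .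
  have "h * (ginv a * s * a) = ginv a * (h * s) * a" using ia by (simp add: mult.assoc[symmetric])
  also have "\<dots> = h" using s ia units_ginv(2)[OF a(1)] by (metis mult.assoc mult_1_right)
  finally have 2: "h * (ginv a * s * a) = h" .
  have "ginv a * s * a \<in> units" using a s by (simp add: units_mult ginv_in_units)
  with 1 2 show ?thesis unfolding Ws_def by simp
qed

definition dcoset :: "'a::monoid_mult set \<Rightarrow> 'a \<Rightarrow> 'a set \<Rightarrow> 'a set" where
  "dcoset X w Y = {x * w * y | x y. x \<in> X \<and> y \<in> Y}"

lemma dcoset_refl: "w \<in> dcoset (Wc e) w (Wc f)"
  unfolding dcoset_def by (intro CollectI exI[of _ 1]) (simp add: one_in_Wc)

lemma dcoset_trans:
  assumes "w' \<in> dcoset (Wc e) w (Wc f)" "d \<in> dcoset (Wc e) w' (Wc f)"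
  shows "d \<in> dcoset (Wc e) w (Wc f)"
proof -
  obtain x y x' y' where "w' = x * w * y" "d = x' * w' * y'" "x \<in> Wc e" "y \<in> Wc f" "x' \<in> Wc e" "y' \<in> Wc f"
    using assms unfolding dcoset_def by blast
  then show ?thesis unfolding dcoset_def
    by (intro CollectI exI[of _ "x' * x"] exI[of _ "y * y'"]) (simp add: Wc_mult mult.assoc)
qed

lemma dcoset_sym:
  assumes "w' \<in> dcoset (Wc e) w (Wc f)"
  shows "w \<in> dcoset (Wc e) w' (Wc f)"
proof -
  obtain x y where xy: "w' = x * w * y" "x \<in> Wc e" "y \<in> Wc f"
    using assms unfolding dcoset_def by blast
  then have "w = ginv x * w' * ginv y"
    using units_ginv(1,4)[of x] units_ginv(1)[of y] unfolding Wc_def by (simp add: mult.assoc)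
  with xy show ?thesis unfolding dcoset_def by (blast intro: Wc_ginv)
qed

lemma dcoset_units: "w \<in> units \<Longrightarrow> d \<in> dcoset (Wc e) w (Wc f) \<Longrightarrow> d \<in> units"
  unfolding dcoset_def Wc_def by (auto intro: units_mult)

locale renner_coxeter = coxeter S for S :: "'a::monoid_mult set" +
  fixes L :: "'a set"
  assumes gen_renner_coxeter: "gen_renner_coxeter L S"
begin

lemma factorisable: "factorisable TYPE('a)"
  using gen_renner_coxeter unfolding gen_renner_coxeter_def by (elim conjE)

lemma L_idems: "L \<subseteq> idems"
  using gen_renner_coxeter unfolding gen_renner_coxeter_def by (elim conjE)

lemma L_conj_ex1_all: "\<forall>e \<in> idems. \<exists>!f. f \<in> L \<and> (\<exists>w \<in> units. w * f * ginv w = e)"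
  using gen_renner_coxeter unfolding gen_renner_coxeter_def by (elim conjE)

lemma L_conj_le_all: "\<forall>e1 \<in> idems. \<forall>e2 \<in> idems. idem_le e1 e2 \<longrightarrow>
    (\<exists>w \<in> units. \<exists>f1 \<in> L. \<exists>f2 \<in> L. idem_le f1 f2 \<and> w * f1 * ginv w = e1 \<and> w * f2 * ginv w = e2)"
  using gen_renner_coxeter unfolding gen_renner_coxeter_def by (elim conjE)

lemma parabolic_all: "\<forall>e \<in> L. (\<exists>I \<subseteq> S. Wc e = subgen I) \<and> (\<exists>I \<subseteq> S. Ws e = subgen I)"
  using gen_renner_coxeter unfolding gen_renner_coxeter_def by (elim conjE)

lemma lam_up_mono_all: "\<forall>e \<in> L. \<forall>f \<in> L. idem_le e f \<longrightarrow> lam_up S e \<subseteq> lam_up S f"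
  using gen_renner_coxeter unfolding gen_renner_coxeter_def by (elim conjE)

lemma L_conj_ex1: "e \<in> idems \<Longrightarrow> \<exists>!f. f \<in> L \<and> (\<exists>w \<in> units. w * f * ginv w = e)"
  using L_conj_ex1_all by (rule bspec)

lemma L_conj_le:
  "e1 \<in> idems \<Longrightarrow> e2 \<in> idems \<Longrightarrow> idem_le e1 e2 \<Longrightarrow>
    \<exists>w \<in> units. \<exists>f1 \<in> L. \<exists>f2 \<in> L. idem_le f1 f2 \<and> w * f1 * ginv w = e1 \<and> w * f2 * ginv w = e2"
  using L_conj_le_all by blast

lemma lam_up_mono: "e \<in> L \<Longrightarrow> f \<in> L \<Longrightarrow> idem_le e f \<Longrightarrow> lam_up S e \<subseteq> lam_up S f"
  using lam_up_mono_all by blast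

lemma Wc_parabolic: "e \<in> L \<Longrightarrow> lam S e \<subseteq> S \<and> Wc e = subgen (lam S e)"
proof -
  assume "e \<in> L"
  then have "\<exists>I. I \<subseteq> S \<and> Wc e = subgen I" using parabolic_all by blast
  then show ?thesis unfolding lam_def by (rule someI_ex)
qed

lemma Ws_parabolic: "e \<in> L \<Longrightarrow> lam_low S e \<subseteq> S \<and> Ws e = subgen (lam_low S e)"
proof -
  assume "e \<in> L"
  then have "\<exists>I. I \<subseteq> S \<and> Ws e = subgen I" using parabolic_all by blast
  then show ?thesis unfolding lam_low_def by (rule someI_ex)
qed

lemma idems_commute: "(e::'a) \<in> idems \<Longrightarrow> f \<in> idems \<Longrightarrow> e * f = f * e"
  using factorisable unfolding factorisable_def by blast

lemma unit_mult_idem: "\<exists>g e. (x::'a) = g * e \<and> g \<in> units \<and> e \<in> idems"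
  using factorisable unfolding factorisable_def by blast

lemma L_conj_unique:
  assumes "f1 \<in> L" "f2 \<in> L" "w1 \<in> units" "w2 \<in> units" "w1 * f1 * ginv w1 = w2 * f2 * ginv w2"
  shows "f1 = f2"
proof -
  have "w1 * f1 * ginv w1 \<in> idems" using assms(1,3) L_idems conj_in_idems by blast
  with L_conj_ex1 assms show ?thesis by metis
qed

lemma lam_letter:
  assumes "e \<in> L" "s \<in> lam S e"
  shows "s \<in> S" "s \<in> lam_up S e \<or> s \<in> lam_low S e"
proof -
  have s: "s \<in> S" "s \<in> Wc e" using Wc_parabolic[OF assms(1)] assms(2) by (auto intro: subgen.gen)
  then show "s \<in> S" by simp
  show "s \<in> lam_up S e \<or> s \<in> lam_low S e"
  proof (cases "s * e = e")
    case True
    then have "s \<in> subgen (lam_low S e)" using s(2) Ws_parabolic[OF assms(1)] unfolding Wc_def Ws_def by auto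
    then show ?thesis using gen_in_parabolic Ws_parabolic[OF assms(1)] s(1) by blast
  qed (use s in \<open>auto simp: lam_up_def Wc_def\<close>)
qed

lemma below_conj:
  assumes "e \<in> L" "w \<in> units" "g \<in> idems" "idem_le g (w * e * ginv w)"
  shows "\<exists>v h. v \<in> units \<and> h \<in> L \<and> idem_le h e \<and> v * h * ginv v = g \<and> ginv w * v \<in> Wc e"
proof -
  have "w * e * ginv w \<in> idems" using assms(1,2) L_idems conj_in_idems by blast
  then obtain v h h' where v: "v \<in> units" "h \<in> L" "h' \<in> L" "idem_le h h'"
    "v * h * ginv v = g" "v * h' * ginv v = w * e * ginv w"
    using L_conj_le assms(3,4) by blast
  have "h' = e" using L_conj_unique[OF v(3) assms(1) v(1) assms(2) v(6)] .
  then have "v * e * ginv v = w * e * ginv w" using v(6) by simp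
  then have "v * e = w * e * ginv w * v" using conj_eq_iff[OF v(1)] by blast
  then have "ginv w * v * e = ginv w * (w * (e * (ginv w * v)))" by (simp add: mult.assoc)
  also have "\<dots> = e * (ginv w * v)" using units_ginv(4)[OF assms(2)] .
  finally have "ginv w * v * e = e * (ginv w * v)" .
  then have "ginv w * v \<in> Wc e" using assms(2) v(1) unfolding Wc_def by (simp add: units_mult ginv_in_units)
  with v \<open>h' = e\<close> show ?thesis by blast
qed

lemma Wc_factor:
  assumes h: "h \<in> L" and up: "lam_up S h \<subseteq> Wc e" "lam_up S h \<subseteq> Wc f" and t: "t \<in> Wc h"
  shows "\<exists>a b. t = a * b \<and> a \<in> Wc e \<inter> Wc f \<inter> Wc h \<and> b \<in> Ws h"
proof -
  have "T \<in> lists (lam S h) \<Longrightarrow> \<exists>a b. prod_list T = a * b \<and> a \<in> Wc e \<inter> Wc f \<inter> Wc h \<and> b \<in> Ws h"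
    for T
  proof (induction T)
    case Nil
    show ?case unfolding Wc_def Ws_def by (intro exI[of _ 1]) simp
  next
    case (Cons s T)
    then obtain a b where ab: "prod_list T = a * b" "a \<in> Wc e \<inter> Wc f \<inter> Wc h" "b \<in> Ws h" by auto
    have s: "s \<in> lam S h" using Cons.prems by simp
    show ?case
    proof (cases "s \<in> lam_up S h")
      case True
      then have "s \<in> Wc e \<inter> Wc f \<inter> Wc h" using up lam_up_subset_Wc[OF S_units] by blast
      then show ?thesis using ab by (intro exI[of _ "s * a"] exI[of _ b]) (auto intro: Wc_mult simp: mult.assoc)
    next
      case False
      then have "s \<in> Ws h" using lam_letter[OF h s] Ws_parabolic[OF h] by (auto intro: subgen.gen)
      then have "ginv a * s * a * b \<in> Ws h" using Ws_conj ab Ws_mult by blast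
      moreover have "prod_list (s # T) = a * (ginv a * s * a * b)"
        using ab units_ginv(3)[of a] unfolding Wc_def by (simp add: mult.assoc)
      ultimately show ?thesis using ab by blast
    qed
  qed
  then show ?thesis using subgen_words Wc_parabolic[OF h] t by metis
qed

text \<open>The meet \<open>e w f w\<^sup>-\<^sup>1\<close> of \<open>e\<close> and \<open>w f w\<^sup>-\<^sup>1\<close> is conjugate to one \<open>h \<in> \<Lambda>\<close>, reached by ECS4 once
  from below \<open>e\<close> and once from below \<open>f\<close>; comparing the two conjugating units gives the element of \<open>W(h)\<close>.\<close>

lemma meet_conj:
  assumes e: "e \<in> L" and f: "f \<in> L" and w: "w \<in> units"
  shows "\<exists>u y h. u \<in> Wc e \<and> y \<in> Wc f \<and> h \<in> L \<and> idem_le h e \<and> idem_le h f \<and>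
    ginv u * w * y \<in> Wc h \<and> e * w * f = u * h * ginv u * w"
proof -
  define g where "g = e * (w * f * ginv w)"
  have eI: "e \<in> idems" and f'I: "w * f * ginv w \<in> idems"
    using e f L_idems conj_in_idems[OF w] by auto
  have g: "g \<in> idems" "idem_le g e" "idem_le g (w * f * ginv w)"
    unfolding g_def using idem_le_mult[OF eI f'I idems_commute[OF eI f'I]] by auto
  obtain u h where u: "u \<in> units" "h \<in> L" "idem_le h e" "u * h * ginv u = g" "u \<in> Wc e"
    using below_conj[OF e one_in_units g(1)] g(2) by auto
  obtain v h' where v: "v \<in> units" "h' \<in> L" "idem_le h' f" "v * h' * ginv v = g" "ginv w * v \<in> Wc f"
    using below_conj[OF f w g(1,3)] by auto
  have "h' = h" using L_conj_unique[OF v(2) u(2) v(1) u(1)] v(4) u(4) by simp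
  define t where "t = ginv u * w * (ginv w * v)"
  have tU: "t \<in> units" unfolding t_def using u(1) v(1) w by (simp add: units_mult ginv_in_units)
  have "t * h = ginv u * (g * v)"
    unfolding t_def using v(4) \<open>h' = h\<close> conj_eq_iff[OF v(1)] units_ginv(3)[OF w] by (simp add: mult.assoc)
  also have "\<dots> = h * ginv u * v" using conj_ginv[OF u(1,4)] by (simp add: mult.assoc[symmetric])
  also have "\<dots> = h * t" unfolding t_def using units_ginv(3)[OF w] by (simp add: mult.assoc)
  finally have "t \<in> Wc h" using tU unfolding Wc_def by simp
  moreover have "e * w * f = g * w"
    unfolding g_def using units_ginv(2)[OF w] by (simp add: mult.assoc)
  ultimately show ?thesis using u v \<open>h' = h\<close> unfolding t_def by blast
qed

lemma unit_factorisation: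
  assumes e: "e \<in> L" and f: "f \<in> L" and w: "w \<in> units"
  shows "\<exists>x b y h. x \<in> Wc e \<and> y \<in> Wc f \<and> h \<in> L \<and> b \<in> Ws h \<and> w = x * b * y \<and> e * b * f = h"
proof -
  obtain u y h where u: "u \<in> Wc e" "y \<in> Wc f" "h \<in> L" "idem_le h e" "idem_le h f"
    "ginv u * w * y \<in> Wc h" "e * w * f = u * h * ginv u * w"
    using meet_conj[OF assms] by blast
  have U: "u \<in> units" "y \<in> units" using u(1,2) unfolding Wc_def by auto
  have "lam_up S h \<subseteq> Wc e" "lam_up S h \<subseteq> Wc f"
    using lam_up_mono[OF u(3) e u(4)] lam_up_mono[OF u(3) f u(5)] lam_up_subset_Wc[OF S_units] by blast+
  then obtain a b where ab: "ginv u * w * y = a * b" "a \<in> Wc e \<inter> Wc f \<inter> Wc h" "b \<in> Ws h"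
    using Wc_factor[OF u(3) _ _ u(6)] by blast
  have aU: "a \<in> units" using ab(2) unfolding Wc_def by simp
  have "w = u * (ginv u * w * y) * ginv y" using U by (simp add: mult.assoc units_ginv)
  also have "\<dots> = (u * a) * b * ginv y" unfolding ab(1) by (simp add: mult.assoc)
  finally have w_eq: "w = (u * a) * b * ginv y" .
  define c where "c = ginv a * ginv u"
  have c: "c * e = e * c" using Wc_mult[OF Wc_ginv Wc_ginv] ab(2) u(1) unfolding c_def Wc_def by blast
  have yf: "y * f = f * y" using u(2) unfolding Wc_def by simp
  have "e * b * f = e * (c * w * y) * f"
    using ab(1) units_ginv(4)[OF aU] unfolding c_def by (metis mult.assoc)
  also have "\<dots> = (e * c) * w * (y * f)" by (simp add: mult.assoc)
  also have "\<dots> = (c * e) * w * (f * y)" using c yf by simp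
  also have "\<dots> = c * (e * w * f) * y" by (simp add: mult.assoc)
  also have "\<dots> = ginv a * (ginv u * u) * h * (ginv u * w * y)"
    unfolding c_def u(7) by (simp add: mult.assoc)
  also have "\<dots> = ginv a * (h * a) * b" using ab(1) units_ginv(2)[OF U(1)] by (simp add: mult.assoc)
  also have "\<dots> = ginv a * (a * h) * b" using ab(2) unfolding Wc_def by simp
  also have "\<dots> = h" using ab(3) units_ginv(4)[OF aU] unfolding Ws_def by (simp add: mult.assoc)
  finally have "e * b * f = h" .
  moreover have "u * a \<in> Wc e" "ginv y \<in> Wc f"
    using Wc_mult[OF u(1)] Wc_ginv[OF u(2)] ab(2) by auto
  ultimately show ?thesis using w_eq u(3) ab(3) by blast
qed

lemma Red_iff:
  assumes "e \<in> L" "f \<in> L"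
  shows "w \<in> Red S e f \<longleftrightarrow> w \<in> units \<and> (\<forall>d \<in> dcoset (Wc e) w (Wc f). clen S w \<le> clen S d)"
  unfolding Red_def dcoset_def Wc_parabolic[OF assms(1), THEN conjunct2, symmetric]
    Wc_parabolic[OF assms(2), THEN conjunct2, symmetric] by blast

text \<open>Factor \<open>w = x b y\<close> with \<open>b \<in> W\<^sub>\<star>(h)\<close>, \<open>h = e b f\<close>, and shorten \<open>b\<close> inside the parabolic double
  coset \<open>(W(e) \<inter> W\<^sub>\<star>(h)) b (W(f) \<inter> W\<^sub>\<star>(h))\<close>; this does not change \<open>e b f\<close>.\<close>

lemma dcoset_shorten:
  assumes e: "e \<in> L" "e \<noteq> 1" and f: "f \<in> L" and w: "w \<in> units"
  shows "\<exists>w' \<in> dcoset (Wc e) w (Wc f). clen S w' \<le> clen S w \<and> e * w' * f \<in> L \<and> e * w' * f \<noteq> 1"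
proof -
  obtain x1 b y1 h where K: "x1 \<in> Wc e" "y1 \<in> Wc f" "h \<in> L" "b \<in> Ws h" "w = x1 * b * y1" "e * b * f = h"
    using unit_factorisation[OF e(1) f w] by blast
  have b: "ginv x1 * w * ginv y1 = b"
    using K(1,2,5) units_ginv(4)[of x1] units_ginv(1)[of y1] unfolding Wc_def by (simp add: mult.assoc)
  have le: "lam S e \<subseteq> S" "lam S f \<subseteq> S" "lam_low S h \<subseteq> S"
    using Wc_parabolic e(1) f Ws_parabolic K(3) by blast+
  have "ginv x1 \<in> subgen (lam S e)" "ginv y1 \<in> subgen (lam S f)"
    "ginv x1 * w * ginv y1 \<in> subgen (lam_low S h)"
    using Wc_ginv[OF K(1)] Wc_ginv[OF K(2)] K(4) b Wc_parabolic[OF e(1)] Wc_parabolic[OF f] Ws_parabolic[OF K(3)] by auto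
  then obtain x2 w' y2 where R: "b = x2 * w' * y2" "x2 \<in> subgen (lam S e \<inter> lam_low S h)"
    "y2 \<in> subgen (lam S f \<inter> lam_low S h)" "clen S w' \<le> clen S w"
    using parabolic_double_coset_reduce[OF le _ _ w] b by metis
  have "x2 \<in> Wc e" "x2 \<in> Ws h" "y2 \<in> Wc f" "y2 \<in> Ws h"
    using subgen_mono[OF Int_lower1 R(2)] subgen_mono[OF Int_lower2 R(2)]
      subgen_mono[OF Int_lower1 R(3)] subgen_mono[OF Int_lower2 R(3)]
      Wc_parabolic[OF e(1)] Wc_parabolic[OF f] Ws_parabolic[OF K(3)] by auto
  then have x2: "ginv x2 \<in> Wc e" "ginv x2 \<in> Ws h" and y2: "ginv y2 \<in> Wc f" "ginv y2 \<in> Ws h"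
    and units: "x2 \<in> units" "y2 \<in> units"
    using Wc_ginv Ws_ginv unfolding Wc_def by blast+
  have w': "w' = ginv x2 * b * ginv y2"
    using R(1) units_ginv(4)[OF units(1)] units_ginv(1)[OF units(2)] by (simp add: mult.assoc)
  have "b \<in> dcoset (Wc e) w (Wc f)" using b K(1,2) unfolding dcoset_def by (blast intro: Wc_ginv)
  moreover have "w' \<in> dcoset (Wc e) b (Wc f)" using w' x2(1) y2(1) unfolding dcoset_def by blast
  ultimately have "w' \<in> dcoset (Wc e) w (Wc f)" by (rule dcoset_trans)
  have "e * w' * f = (e * ginv x2) * b * (ginv y2 * f)" using w' by (simp add: mult.assoc)
  also have "\<dots> = (ginv x2 * e) * b * (f * ginv y2)" using x2(1) y2(1) unfolding Wc_def by simp
  also have "\<dots> = ginv x2 * (e * b * f) * ginv y2" by (simp add: mult.assoc)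
  also have "\<dots> = h" using K(6) x2(2) y2(2) unfolding Ws_def by (simp add: mult.assoc)
  finally have ewf: "e * w' * f = h" .
  have "h \<noteq> 1"
  proof
    assume "h = 1"
    then have "e * (b * f) = 1" using K(6) by (simp add: mult.assoc)
    then show False using idem_eq_one_if_right_inverse e L_idems unfolding idems_def by blast
  qed
  then show ?thesis using \<open>w' \<in> dcoset (Wc e) w (Wc f)\<close> R(4) ewf K(3) by blast
qed

lemma Red_factorisation:
  assumes e: "e \<in> L" "e \<noteq> 1" and f: "f \<in> L" and A: "A \<in> units"
  shows "\<exists>x w y. x \<in> Wc e \<and> y \<in> Wc f \<and> w \<in> Red S e f \<and> A = x * w * y \<and> e * w * f \<in> L \<and> e * w * f \<noteq> 1"
proof -
  let ?D = "\<lambda>w. dcoset (Wc e) w (Wc f)"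
  obtain w0 where w0: "w0 \<in> ?D A" "\<And>d. d \<in> ?D A \<Longrightarrow> clen S w0 \<le> clen S d"
    using ex_has_least_nat[of "\<lambda>d. d \<in> ?D A" A "clen S"] dcoset_refl by blast
  obtain w where w: "w \<in> ?D w0" "clen S w \<le> clen S w0" "e * w * f \<in> L" "e * w * f \<noteq> 1"
    using dcoset_shorten[OF e f dcoset_units[OF A w0(1)]] by blast
  have wA: "w \<in> ?D A" using dcoset_trans[OF w0(1) w(1)] .
  have "clen S w \<le> clen S d" if "d \<in> ?D w" for d
    using w0(2)[OF dcoset_trans[OF wA that]] w(2) by simp
  then have "w \<in> Red S e f"
    unfolding Red_iff[OF e(1) f] using dcoset_units[OF A wA] by blast
  moreover obtain x y where "A = x * w * y" "x \<in> Wc e" "y \<in> Wc f"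
    using dcoset_sym[OF wA] unfolding dcoset_def by blast
  ultimately show ?thesis using w(3,4) by blast
qed

lemma Ws_if_fixes:
  assumes g: "g \<in> L" and k: "k \<in> units" and gk: "g * k = g"
  shows "k \<in> Ws g"
proof -
  have gI: "g \<in> idems" using g L_idems by auto
  define f where "f = k * g * ginv k"
  have fI: "f \<in> idems" unfolding f_def using conj_in_idems[OF k gI] .
  have "g * ginv k = g * k * ginv k" using gk by simp
  also have "\<dots> = g" using units_ginv(1)[OF k] by (simp add: mult.assoc)
  finally have gik: "g * ginv k = g" .
  have "g * f = (g * k) * g * ginv k" unfolding f_def by (simp add: mult.assoc)
  also have "\<dots> = g" using gk gI gik unfolding idems_def by simp
  finally have "g * f = g" .
  then have "idem_le g f" using idems_commute[OF gI fI] unfolding idem_le_def by simp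
  then obtain w f1 f2 where W: "w \<in> units" "f1 \<in> L" "f2 \<in> L" "w * f1 * ginv w = g" "w * f2 * ginv w = f"
    using L_conj_le[OF gI fI] by blast
  have "f1 = g" using L_conj_unique[OF W(2) g W(1) one_in_units] W(4) by simp
  moreover have "f2 = g" using L_conj_unique[OF W(3) g W(1) k] W(5) f_def by simp
  ultimately have "k * g * ginv k = g" using W(4,5) f_def by simp
  then have "k * g = g" using conj_eq_iff[OF k] gk by simp
  then show ?thesis using gk k unfolding Ws_def by simp
qed

lemma L_conj_of_unit_multiples:
  assumes g: "g \<in> L" "g' \<in> L" and U: "A \<in> units" "C \<in> units" "A' \<in> units" "C' \<in> units"
    and eq: "A * g * C = A' * g' * C'"
  shows "g = g'" "A * g * ginv A = A' * g' * ginv A'"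
proof -
  have I: "A * g * ginv A \<in> idems" "A' * g' * ginv A' \<in> idems"
    using conj_in_idems U g L_idems by auto
  have "A * g * ginv A * (A * C) = A * g * C" using units_ginv(4)[OF U(1)] by (simp add: mult.assoc)
  also have "\<dots> = A' * g' * ginv A' * (A' * C')"
    using eq units_ginv(4)[OF U(3)] by (simp add: mult.assoc)
  finally show conj: "A * g * ginv A = A' * g' * ginv A'"
    using idems_eq_if_unit_multiples[OF I idems_commute[OF I]] units_mult[OF U(1,2)]
      units_mult[OF U(3,4)] by blast
  show "g = g'" using L_conj_unique[OF g U(1) U(3) conj] .
qed

end

section \<open>The presentation\<close>

lemma alt_word_in_lists: "s \<in> S \<Longrightarrow> t \<in> S \<Longrightarrow> alt_word s t m \<in> lists S"
  by (induction m arbitrary: s t) auto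

lemma alt_word_add:
  "alt_word s t (a + b) = alt_word s t a @ (if even a then alt_word s t b else alt_word t s b)"
  by (induction a arbitrary: s t) auto

lemma alt_word_snoc: "alt_word s t (Suc n) = alt_word s t n @ [if even n then s else t]"
  by (induction n arbitrary: s t) auto

lemma rev_alt_word: "rev (alt_word t s m) = (if even m then alt_word s t m else alt_word t s m)"
proof (induction m arbitrary: s t)
  case (Suc m)
  have "rev (alt_word t s (Suc m)) = (if even m then alt_word t s m else alt_word s t m) @ [t]"
    using Suc.IH[of s t] by simp
  then show ?case by (auto simp add: alt_word_snoc simp del: alt_word.simps(2))
qed simp

lemma concat_replicate_alt_word: "concat (replicate m [s, t]) = alt_word s t m @ rev (alt_word t s m)"
proof -
  have "concat (replicate m [s, t]) = alt_word s t (2 * m)"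
    by (induction m) (simp_all add: numeral_2_eq_2)
  then show ?thesis by (simp add: mult_2 alt_word_add rev_alt_word)
qed

locale renner_coxeter_words = renner_coxeter S L for S L :: "'a::monoid_mult set" +
  fixes rw :: "'a \<Rightarrow> 'a list"
  assumes rw: "\<forall>w \<in> units. rw w \<in> lists S \<and> prod_list (rw w) = w \<and> length (rw w) = clen S w"
begin

definition rels :: "('a list \<times> 'a list) set" where
  "rels = cox1_rels S \<union> cox2_rels S \<union> ren1_rels L S \<union> ren2_rels L S \<union> ren3_rels L S rw"

abbreviation rcong :: "'a list \<Rightarrow> 'a list \<Rightarrow> bool" (infix "\<approx>" 50) where
  "u \<approx> v \<equiv> (u, v) \<in> wcong rels"

lemma rels_rcong:
  "(l, r) \<in> cox1_rels S \<Longrightarrow> l \<approx> r" "(l, r) \<in> cox2_rels S \<Longrightarrow> l \<approx> r"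
  "(l, r) \<in> ren1_rels L S \<Longrightarrow> l \<approx> r" "(l, r) \<in> ren2_rels L S \<Longrightarrow> l \<approx> r"
  "(l, r) \<in> ren3_rels L S rw \<Longrightarrow> l \<approx> r"
  unfolding rels_def by (auto intro: wcong_rel)

lemma prod_list_alt_word_braid:
  assumes "s \<in> S" "t \<in> S" "(s * t) ^ m = 1"
  shows "prod_list (alt_word s t m) = prod_list (alt_word t s m)"
proof -
  let ?u = "alt_word s t m" and ?v = "alt_word t s m"
  have "prod_list (?u @ rev ?v) = (s * t) ^ m"
    using prod_list_alternating[of m s t] unfolding concat_replicate_alt_word .
  then have uv: "prod_list ?u * prod_list (rev ?v) = 1" using assms(3) by simp
  have "prod_list ?u = prod_list ?u * (prod_list (rev ?v) * prod_list ?v)"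
    using prod_list_rev(2)[OF alt_word_in_lists[OF assms(2,1)]] by simp
  also have "\<dots> = prod_list ?v" using uv by (simp add: mult.assoc[symmetric])
  finally show ?thesis .
qed

lemma rels_sound: "\<forall>(l, r) \<in> rels. prod_list l = prod_list r"
proof (clarify)
  fix l r assume "(l, r) \<in> rels"
  then consider "(l, r) \<in> cox1_rels S" | "(l, r) \<in> cox2_rels S" | "(l, r) \<in> ren1_rels L S"
    | "(l, r) \<in> ren2_rels L S" | "(l, r) \<in> ren3_rels L S rw"
    unfolding rels_def by blast
  then show "prod_list l = prod_list r"
  proof cases
    case 1 then show ?thesis unfolding cox1_rels_def using S_involution by auto
  next
    case 2 then show ?thesis
      unfolding cox2_rels_def has_order_def using prod_list_alt_word_braid by auto
  next
    case 3 then show ?thesis unfolding ren1_rels_def lam_up_def by auto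
  next
    case 4
    then obtain s e where "e \<in> L" "s \<in> lam_low S e" "(l, r) = ([s, e], [e]) \<or> (l, r) = ([e, s], [e])"
      unfolding ren2_rels_def by blast
    moreover from this have "s \<in> Ws e" using Ws_parabolic by (auto intro: subgen.gen)
    ultimately show ?thesis unfolding Ws_def by auto
  next
    case 5 then show ?thesis
      unfolding ren3_rels_def Red_def using rw by (auto simp: mult.assoc)
  qed
qed

lemma rcong_prod_list_eq: "u \<approx> v \<Longrightarrow> prod_list u = prod_list v"
  using wcong_prod_list_eq[OF rels_sound] .

lemma append_rev_rcong: "u \<in> lists S \<Longrightarrow> u @ rev u \<approx> []"
proof (induction u)
  case (Cons s u)
  then have "u @ rev u \<approx> []" by simp
  then have "[s] @ (u @ rev u) @ [s] \<approx> [s] @ [] @ [s]" by (rule wcong_context)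
  moreover have "[s, s] \<approx> []" using Cons.prems by (intro rels_rcong(1)) (auto simp: cox1_rels_def)
  ultimately show ?case by (auto intro: wcong_trans)
qed simp

lemma coxeter_rels_rcong: "coxeter_rels S \<subseteq> wcong rels"
proof
  fix r assume r: "r \<in> coxeter_rels S"
  show "r \<in> wcong rels"
  proof (cases "r \<in> cox1_rels S")
    case True then show ?thesis using rels_rcong(1) by (cases r) blast
  next
    case False
    then obtain s t m where st: "r = (concat (replicate m [s, t]), [])" "s \<in> S" "t \<in> S" "s \<noteq> t"
      "has_order (s * t) m"
      using r unfolding coxeter_rels_def cox1_rels_def by blast
    let ?u = "alt_word s t m" and ?v = "alt_word t s m"
    have "?u \<approx> ?v" using st by (intro rels_rcong(2)) (auto simp: cox2_rels_def)
    then have "?u @ rev ?v \<approx> ?v @ rev ?v" using wcong_context[of _ _ rels "[]"] by simp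
    moreover have "?v @ rev ?v \<approx> []" using alt_word_in_lists st(2,3) by (intro append_rev_rcong)
    ultimately have "?u @ rev ?v \<approx> []" by (rule wcong_trans)
    then show ?thesis using st(1) concat_replicate_alt_word[of m s t] by simp
  qed
qed

lemma prod_list_eq_rcong: "u \<in> lists S \<Longrightarrow> v \<in> lists S \<Longrightarrow> prod_list u = prod_list v \<Longrightarrow> u \<approx> v"
  using prod_list_eq_iff_wcong wcong_mono[OF coxeter_rels_rcong] by blast

lemma idem_absorbs_right: "e \<in> L - {1} \<Longrightarrow> H \<in> lists (lam_low S e) \<Longrightarrow> [e] @ H \<approx> [e]"
proof (induction H)
  case (Cons s H)
  have "[e, s] \<approx> [e]" using Cons.prems by (intro rels_rcong(4)) (auto simp: ren2_rels_def)
  then have "[] @ [e, s] @ H \<approx> [] @ [e] @ H" by (rule wcong_context)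
  then show ?case using Cons by (auto intro: wcong_trans)
qed simp

lemma letter_past_idem_right:
  assumes e: "e \<in> L - {1}" and s: "s \<in> lam S e"
  shows "\<exists>X \<in> lists S. [e, s] \<approx> X @ [e]"
proof (cases "s \<in> lam_up S e")
  case True
  then have "[s, e] \<approx> [e, s]" using e by (intro rels_rcong(3)) (auto simp: ren1_rels_def)
  then have "[e, s] \<approx> [s] @ [e]" by (simp add: wcong_sym)
  moreover have "s \<in> S" using lam_letter(1) e s by blast
  ultimately show ?thesis by (intro bexI[of _ "[s]"]) simp_all
next
  case False
  then have "[e, s] \<approx> [e]" using lam_letter(2) e s by (intro rels_rcong(4)) (auto simp: ren2_rels_def)
  then show ?thesis by (intro bexI[of _ "[]"]) simp_all
qed

lemma letter_past_idem_left:
  assumes e: "e \<in> L - {1}" and s: "s \<in> lam S e"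
  shows "\<exists>Y \<in> lists S. [s, e] \<approx> [e] @ Y"
proof (cases "s \<in> lam_up S e")
  case True
  then have "[s, e] \<approx> [e, s]" using e by (intro rels_rcong(3)) (auto simp: ren1_rels_def)
  moreover have "s \<in> S" using lam_letter(1) e s by blast
  ultimately show ?thesis by (intro bexI[of _ "[s]"]) simp_all
next
  case False
  then have "[s, e] \<approx> [e]" using lam_letter(2) e s by (intro rels_rcong(4)) (auto simp: ren2_rels_def)
  then show ?thesis by (intro bexI[of _ "[]"]) simp_all
qed

lemma word_past_idem_right:
  assumes e: "e \<in> L - {1}"
  shows "X \<in> lists (lam S e) \<Longrightarrow> \<exists>X' \<in> lists S. [e] @ X \<approx> X' @ [e]"
proof (induction X)
  case (Cons s X)
  have "s \<in> lam S e" using Cons.prems by simp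
  then obtain X1 where X1: "X1 \<in> lists S" "[e, s] \<approx> X1 @ [e]"
    using letter_past_idem_right[OF e] by blast
  obtain X2 where X2: "X2 \<in> lists S" "[e] @ X \<approx> X2 @ [e]" using Cons by auto
  have "[] @ [e, s] @ X \<approx> [] @ (X1 @ [e]) @ X" using X1(2) by (rule wcong_context)
  moreover have "X1 @ ([e] @ X) @ [] \<approx> X1 @ (X2 @ [e]) @ []" using X2(2) by (rule wcong_context)
  ultimately have "[e] @ s # X \<approx> (X1 @ X2) @ [e]" by (auto intro: wcong_trans)
  then show ?case using X1(1) X2(1) by (intro bexI[of _ "X1 @ X2"]) auto
qed (auto intro: bexI[of _ "[]"])

lemma word_past_idem_left:
  assumes e: "e \<in> L - {1}"
  shows "Y \<in> lists (lam S e) \<Longrightarrow> \<exists>Y' \<in> lists S. Y @ [e] \<approx> [e] @ Y'"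
proof (induction Y rule: rev_induct)
  case (snoc s Y)
  have "s \<in> lam S e" using snoc.prems by simp
  then obtain Y1 where Y1: "Y1 \<in> lists S" "[s, e] \<approx> [e] @ Y1"
    using letter_past_idem_left[OF e] by blast
  obtain Y2 where Y2: "Y2 \<in> lists S" "Y @ [e] \<approx> [e] @ Y2" using snoc by auto
  have "Y @ [s, e] @ [] \<approx> Y @ ([e] @ Y1) @ []" using Y1(2) by (rule wcong_context)
  moreover have "[] @ (Y @ [e]) @ Y1 \<approx> [] @ ([e] @ Y2) @ Y1" using Y2(2) by (rule wcong_context)
  ultimately have "(Y @ [s]) @ [e] \<approx> [e] @ (Y2 @ Y1)" by (auto intro: wcong_trans)
  then show ?case using Y1(1) Y2(1) by (intro bexI[of _ "Y2 @ Y1"]) auto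
qed (auto intro: bexI[of _ "[]"])

lemma merge_idems:
  assumes e: "e \<in> L - {1}" and f: "f \<in> L - {1}" and a: "a \<in> lists S"
  shows "\<exists>p g q. p \<in> lists S \<and> q \<in> lists S \<and> g \<in> L - {1} \<and> [e] @ a @ [f] \<approx> p @ [g] @ q"
proof -
  obtain x w y where M: "x \<in> Wc e" "y \<in> Wc f" "w \<in> Red S e f" "prod_list a = x * w * y"
    "e * w * f \<in> L - {1}"
    using Red_factorisation e f prod_list_in_units[OF a] by blast
  obtain X where X: "X \<in> lists (lam S e)" "prod_list X = x" using subgen_words M(1) Wc_parabolic e by blast
  obtain Y where Y: "Y \<in> lists (lam S f)" "prod_list Y = y" using subgen_words M(2) Wc_parabolic f by blast
  have w: "w \<in> units" using M(3) unfolding Red_def by simp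
  have "X \<in> lists S" "Y \<in> lists S" using X(1) Y(1) Wc_parabolic[of e] Wc_parabolic[of f] e f by auto
  then have "a \<approx> X @ rw w @ Y"
    using prod_list_eq_rcong[OF a] rw w X(2) Y(2) M(4) by (simp add: mult.assoc)
  then have c1: "[e] @ a @ [f] \<approx> [e] @ (X @ rw w @ Y) @ [f]" by (rule wcong_context)
  obtain X' where X': "X' \<in> lists S" "[e] @ X \<approx> X' @ [e]" using word_past_idem_right[OF e X(1)] by blast
  obtain Y' where Y': "Y' \<in> lists S" "Y @ [f] \<approx> [f] @ Y'" using word_past_idem_left[OF f Y(1)] by blast
  have "([e] @ X) @ rw w @ (Y @ [f]) \<approx> (X' @ [e]) @ rw w @ ([f] @ Y')"
    using wcong_append[OF X'(2) wcong_append[OF wcong_refl Y'(2)]] .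
  then have c2: "[e] @ (X @ rw w @ Y) @ [f] \<approx> X' @ (e # rw w @ [f]) @ Y'" by simp
  have "e # rw w @ [f] \<approx> [e * w * f]"
    using M(3) e f by (intro rels_rcong(5)) (auto simp: ren3_rels_def)
  then have c3: "X' @ (e # rw w @ [f]) @ Y' \<approx> X' @ [e * w * f] @ Y'" by (rule wcong_context)
  show ?thesis using wcong_trans[OF c1 wcong_trans[OF c2 c3]] X'(1) Y'(1) M(5) by blast
qed

definition normal_forms :: "'a list set" where
  "normal_forms = lists S \<union> {a @ [g] @ c | a g c. a \<in> lists S \<and> g \<in> L - {1} \<and> c \<in> lists S}"

lemma cons_normal_form:
  assumes x: "x \<in> S \<union> (L - {1})" and v: "v \<in> normal_forms"
  shows "\<exists>v' \<in> normal_forms. x # v \<approx> v'"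
proof (cases "x \<in> S")
  case True
  have "x # v \<in> normal_forms"
  proof (cases "v \<in> lists S")
    case False
    then obtain a g c where "v = a @ [g] @ c" "a \<in> lists S" "g \<in> L - {1}" "c \<in> lists S"
      using v unfolding normal_forms_def by blast
    then have "x # v = (x # a) @ [g] @ c \<and> x # a \<in> lists S \<and> g \<in> L - {1} \<and> c \<in> lists S"
      using True by simp
    then show ?thesis unfolding normal_forms_def by blast
  qed (use True in \<open>simp add: normal_forms_def\<close>)
  then show ?thesis by (intro bexI[of _ "x # v"] wcong_refl)
next
  case False
  then have xL: "x \<in> L - {1}" using x by blast
  show ?thesis
  proof (cases "v \<in> lists S")
    case True
    then have "[] @ [x] @ v \<in> normal_forms" using xL unfolding normal_forms_def by blast
    then show ?thesis by (intro bexI[of _ "x # v"] wcong_refl) simp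
  next
    case False
    then obtain a g c where v: "v = a @ [g] @ c" "a \<in> lists S" "g \<in> L - {1}" "c \<in> lists S"
      using v unfolding normal_forms_def by blast
    obtain p g' q where m: "p \<in> lists S" "q \<in> lists S" "g' \<in> L - {1}" "[x] @ a @ [g] \<approx> p @ [g'] @ q"
      using merge_idems[OF xL v(3,2)] by blast
    have "[] @ ([x] @ a @ [g]) @ c \<approx> [] @ (p @ [g'] @ q) @ c" using m(4) by (rule wcong_context)
    then have "x # v \<approx> p @ [g'] @ (q @ c)" using v(1) by simp
    moreover have "q @ c \<in> lists S" using m(2) v(4) by simp
    then have "p @ [g'] @ (q @ c) \<in> normal_forms" using m(1,3) unfolding normal_forms_def by blast
    ultimately show ?thesis by blast
  qed
qed

lemma normal_form_exists: "u \<in> lists (S \<union> (L - {1})) \<Longrightarrow> \<exists>v \<in> normal_forms. u \<approx> v"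
proof (induction u)
  case Nil then show ?case unfolding normal_forms_def by (intro bexI[of _ "[]"]) simp_all
next
  case (Cons x u)
  then obtain v where v: "v \<in> normal_forms" "u \<approx> v" by auto
  then have "[x] @ u @ [] \<approx> [x] @ v @ []" by (intro wcong_context)
  moreover have "x \<in> S \<union> (L - {1})" using Cons.prems by simp
  then obtain v' where "v' \<in> normal_forms" "x # v \<approx> v'"
    using cons_normal_form v(1) by blast
  ultimately show ?case by (auto intro: wcong_trans)
qed

lemma idem_normal_form_not_unit:
  assumes "a \<in> lists S" "c \<in> lists S" "g \<in> L - {1}"
  shows "prod_list (a @ [g] @ c) \<notin> units"
proof
  assume P: "prod_list (a @ [g] @ c) \<in> units"
  have A: "prod_list a \<in> units" and C: "prod_list c \<in> units" using prod_list_in_units assms by auto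
  have "ginv (prod_list a) * prod_list (a @ [g] @ c) * ginv (prod_list c) = g"
    using units_ginv(4)[OF A] units_ginv(1)[OF C] by (simp add: mult.assoc)
  moreover have "ginv (prod_list a) * prod_list (a @ [g] @ c) * ginv (prod_list c) \<in> units"
    using A C P by (intro units_mult ginv_in_units)
  ultimately have "g * ginv g = 1" using units_ginv(1) by metis
  then show False using idem_eq_one_if_right_inverse assms(3) L_idems unfolding idems_def by blast
qed

lemma idem_absorbs_fixing:
  assumes g: "g \<in> L - {1}" and c: "c \<in> lists S" "c' \<in> lists S"
    and eq: "g * prod_list c = g * prod_list c'"
  shows "[g] @ c \<approx> [g] @ c'"
proof -
  let ?C = "prod_list c" and ?C' = "prod_list c'"
  have U: "?C \<in> units" "?C' \<in> units" using prod_list_in_units c by auto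
  have "g * (?C * ginv ?C') = g * ?C' * ginv ?C'" using eq by (simp add: mult.assoc[symmetric])
  also have "\<dots> = g" using units_ginv(1)[OF U(2)] by (simp add: mult.assoc)
  finally have "g * (?C * ginv ?C') = g" .
  then have "?C * ginv ?C' \<in> Ws g" using Ws_if_fixes g U by (simp add: units_mult ginv_in_units)
  then obtain K where K: "K \<in> lists (lam_low S g)" "prod_list K = ?C * ginv ?C'"
    using subgen_words Ws_parabolic g by (metis DiffD1)
  then have "K @ c' \<in> lists S" using Ws_parabolic g c(2) by auto
  moreover have "prod_list (K @ c') = ?C" using K(2) units_ginv(2)[OF U(2)] by (simp add: mult.assoc)
  ultimately have "c \<approx> K @ c'" using prod_list_eq_rcong c(1) by simp
  then have "[g] @ c \<approx> [g] @ K @ c'" using wcong_context[of c "K @ c'" rels "[g]" "[]"] by simp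
  moreover have "[g] @ K @ c' \<approx> [g] @ c'"
    using wcong_context[OF idem_absorbs_right[OF g K(1)], of "[]" c'] by simp
  ultimately show ?thesis by (rule wcong_trans)
qed

lemma idem_normal_forms_rcong:
  assumes a: "a \<in> lists S" "c \<in> lists S" "a' \<in> lists S" "c' \<in> lists S"
    and g: "g \<in> L - {1}" "g' \<in> L - {1}"
    and eq: "prod_list (a @ [g] @ c) = prod_list (a' @ [g'] @ c')"
  shows "a @ [g] @ c \<approx> a' @ [g'] @ c'"
proof -
  let ?A = "prod_list a" and ?C = "prod_list c" and ?A' = "prod_list a'" and ?C' = "prod_list c'"
  have U: "?A \<in> units" "?C \<in> units" "?A' \<in> units" "?C' \<in> units" using prod_list_in_units a by auto
  have "?A * g * ?C = ?A' * g' * ?C'" using eq by (simp add: mult.assoc)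
  from L_conj_of_unit_multiples[OF _ _ U this] g
  have gg': "g' = g" and conj: "?A' * g * ginv ?A' = ?A * g * ginv ?A" by auto
  define z where "z = ginv ?A * ?A'"
  have zU: "z \<in> units" unfolding z_def using U by (simp add: units_mult ginv_in_units)
  have "z * g = ginv ?A * (?A' * g * ginv ?A') * ?A'"
    unfolding z_def using units_ginv(2)[OF U(3)] by (simp add: mult.assoc)
  also have "\<dots> = g * z" unfolding conj z_def using units_ginv(4)[OF U(1)] by (simp add: mult.assoc)
  finally have "z \<in> Wc g" using zU unfolding Wc_def by simp
  then obtain Z where Z: "Z \<in> lists (lam S g)" "prod_list Z = z"
    using subgen_words Wc_parabolic g(1) by (metis DiffD1)
  have "a @ Z \<in> lists S" using Z(1) Wc_parabolic g(1) a(1) by auto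
  moreover have "prod_list (a @ Z) = ?A'" using Z(2) units_ginv(3)[OF U(1)] unfolding z_def by simp
  ultimately have "a' \<approx> a @ Z" using prod_list_eq_rcong a(3) by simp
  then have c1: "a' @ [g'] @ c' \<approx> a @ (Z @ [g]) @ c'"
    using wcong_context[of a' "a @ Z" rels "[]" "[g] @ c'"] gg' by simp
  obtain Z' where Z': "Z' \<in> lists S" "Z @ [g] \<approx> [g] @ Z'" using word_past_idem_left[OF g(1) Z(1)] by blast
  have c2: "a @ (Z @ [g]) @ c' \<approx> a @ [g] @ (Z' @ c')" using wcong_context[OF Z'(2), of a c'] by simp
  have "?A * (g * prod_list (Z' @ c')) = ?A * (g * ?C)"
    using rcong_prod_list_eq[OF wcong_trans[OF c1 c2]] eq by (simp add: mult.assoc)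
  then have "g * prod_list (Z' @ c') = g * ?C" using units_cancel_left U(1) by blast
  then have "[g] @ c \<approx> [g] @ Z' @ c'" using idem_absorbs_fixing g(1) Z'(1) a(2,4) by simp
  then have "a @ [g] @ c \<approx> a @ [g] @ Z' @ c'" using wcong_context[of _ _ rels a "[]"] by simp
  then show ?thesis using wcong_trans[OF c1 c2] by (blast intro: wcong_trans wcong_sym)
qed

lemma normal_forms_rcong:
  assumes "v \<in> normal_forms" "v' \<in> normal_forms" "prod_list v = prod_list v'"
  shows "v \<approx> v'"
proof -
  have unit_iff: "prod_list w \<in> units \<longleftrightarrow> w \<in> lists S" if "w \<in> normal_forms" for w
  proof
    assume "prod_list w \<in> units"
    then show "w \<in> lists S"
      using that idem_normal_form_not_unit unfolding normal_forms_def by blast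
  qed (rule prod_list_in_units)
  show ?thesis
  proof (cases "v \<in> lists S")
    case True
    then have "v' \<in> lists S" using unit_iff assms by metis
    then show ?thesis using True assms(3) prod_list_eq_rcong by blast
  next
    case False
    then have "v' \<notin> lists S" using unit_iff assms by metis
    then obtain a g c a' g' c' where "v = a @ [g] @ c" "a \<in> lists S" "g \<in> L - {1}" "c \<in> lists S"
      "v' = a' @ [g'] @ c'" "a' \<in> lists S" "g' \<in> L - {1}" "c' \<in> lists S"
      using False assms(1,2) unfolding normal_forms_def by blast
    then show ?thesis using idem_normal_forms_rcong assms(3) by blast
  qed
qed

lemma generated: "\<exists>u \<in> lists (S \<union> (L - {1})). prod_list u = x"
proof -
  obtain G E where GE: "x = G * E" "G \<in> units" "E \<in> idems" using unit_mult_idem by blast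
  obtain f w where fw: "f \<in> L" "w \<in> units" "w * f * ginv w = E" using L_conj_ex1[OF GE(3)] by blast
  show ?thesis
  proof (cases "f = 1")
    case True
    then have "E = 1" using fw units_ginv(1)[OF fw(2)] by simp
    then have "x \<in> units" using GE by simp
    then show ?thesis using units_words by blast
  next
    case False
    obtain u1 u2 where "u1 \<in> lists S" "prod_list u1 = G * w" "u2 \<in> lists S" "prod_list u2 = ginv w"
      using units_words units_mult[OF GE(2) fw(2)] ginv_in_units[OF fw(2)] by metis
    then have "u1 @ [f] @ u2 \<in> lists (S \<union> (L - {1}))" "prod_list (u1 @ [f] @ u2) = x"
      using fw False GE(1) by (auto simp: mult.assoc)
    then show ?thesis by blast
  qed
qed

theorem presents: "presents (S \<union> (L - {1})) rels"
  unfolding presents_def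
proof (intro conjI allI ballI generated)
  fix u v assume "u \<in> lists (S \<union> (L - {1}))" "v \<in> lists (S \<union> (L - {1}))"
  then obtain u' v' where "u' \<in> normal_forms" "u \<approx> u'" "v' \<in> normal_forms" "v \<approx> v'"
    using normal_form_exists by meson
  then show "prod_list u = prod_list v \<longleftrightarrow> u \<approx> v"
    using normal_forms_rcong rcong_prod_list_eq by (metis wcong_sym wcong_trans)
qed

end

theorem mainTheorem8:
  fixes \<Lambda> S :: "'a::monoid_mult set" and rw :: "'a \<Rightarrow> 'a list"
  assumes "gen_renner_coxeter \<Lambda> S"
    and "\<forall>w \<in> units. rw w \<in> lists S \<and> prod_list (rw w) = w \<and> length (rw w) = clen S w"
  shows "presents (S \<union> (\<Lambda> - {1}))
           (cox1_rels S \<union> cox2_rels S \<union> ren1_rels \<Lambda> S \<union> ren2_rels \<Lambda> S \<union> ren3_rels \<Lambda> S rw)"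
proof -
  have "coxeter_system S" using assms(1) unfolding gen_renner_coxeter_def by (elim conjE)
  then interpret renner_coxeter_words S \<Lambda> rw
    using assms by unfold_locales
  show ?thesis using presents unfolding rels_def .
qed

end
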